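(* Let $\lambda>\kappa>0$, $\gamma=2\kappa$, and consider the damped Euler system with repulsive Poisson force and quadratic confinement $$\partial_t\rho+\partial_x(\rho v)=0,\qquad\partial_t(\rho v)+\partial_x(\rho v^2)=-\gamma\rho v+\lambda^2\rho\int_{\mathbb{R}}\big(\operatorname{sgn}(x-y)-(x-y)\big)\,d\rho(t,y).$$ Let $\rho_0\in\mathscr P_2(\mathbb{R})$, $v_0\in L^2(\mathbb{R},\rho_0)$, and let $(\rho,v)$ be the solution corresponding to the Lagrangian (equivalently, entropy) solution. Set $\bar x_\infty=\int x\,d\rho_0(x)+\frac1{2\kappa}\int v_0\,d\rho_0$. Then, as $t\to\infty$, $(\rho(t),v(t))$ converges to $(\rho_\infty,v_\infty)$ with $$\rho_\infty(x)=\tfrac12\chi_{(-1,1)}(x-\bar x_\infty),\qquad v_\infty\equiv0,$$ and this convergence is exponentially fast in the metric $d_{\mathscr T_2}$, at a rate proportional to the damping factor $\gamma$.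
   Context: $\Omega=(0,1)$, $\mathfrak m$ Lebesgue measure; $\mathscr K=\{X\in L^2(\Omega)\text{ nondecreasing}\}$; $N_X\mathscr K=\{W\in L^2:\int_\Omega W(Y-X)\le0\ \forall Y\in\mathscr K\}$. The Lagrangian solution is the curve $X\in\mathrm{Lip}_{\mathrm{loc}}([0,\infty);\mathscr K)$ with $X(0)=X^0$ (the monotone rearrangement of $\rho_0$, $X^0(m)=\inf\{x:\rho_0((-\infty,x])>m\}$) solving $\dot X(t)+N_{X(t)}\mathscr K\ni U(t)$ for a.e. $t$, where $U(0)=V^0=v_0\circ X^0$ and $\dot U(t,m)=-2\kappa U(t,m)+\lambda^2\big(2m-1+\int_\Omega X(t,\omega)d\omega-X(t,m)\big)$; then $\rho(t)=X(t)_\#\mathfrak m$ and $v(t)$ is determined by $v(t)\circ X(t)=V(t)$, $V$ the right derivative of $X$. $\mathscr T_2=\{(\rho,v):\rho\in\mathscr P_2(\mathbb{R}),v\in L^2(\rho)\}$ with $d_{\mathscr T_2}((\rho_1,v_1),(\rho_2,v_2))^2=\|X_{\rho_1}-X_{\rho_2}\|_{L^2(\Omega)}^2+\|v_1\circ X_{\rho_1}-v_2\circ X_{\rho_2}\|_{L^2(\Omega)}^2$, $X_{\rho_i}$ the monotone rearrangements. *)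

theory Defs
  imports "HOL-Probability.Probability"
begin

text \<open>The mass space Omega = (0,1) with Lebesgue measure.\<close>
definition Om :: "real measure" where
  "Om = lebesgue_on {0<..<1}"

definition L2 :: "(real \<Rightarrow> real) set" where
  "L2 = {f. f \<in> borel_measurable Om \<and> integrable Om (\<lambda>m. (f m)^2)}"

definition L2norm :: "(real \<Rightarrow> real) \<Rightarrow> real" where
  "L2norm f = sqrt (\<integral>m. (f m)^2 \<partial>Om)"

definition L2inner :: "(real \<Rightarrow> real) \<Rightarrow> (real \<Rightarrow> real) \<Rightarrow> real" where
  "L2inner f g = (\<integral>m. f m * g m \<partial>Om)"

definition Kcone :: "(real \<Rightarrow> real) set" where
  "Kcone = {X \<in> L2. mono_on {0<..<1} X}"

definition normal_cone :: "(real \<Rightarrow> real) \<Rightarrow> (real \<Rightarrow> real) set" where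
  "normal_cone X = {W \<in> L2. \<forall>Y\<in>Kcone. L2inner W (\<lambda>m. Y m - X m) \<le> 0}"

definition L2_deriv_within ::
  "(real \<Rightarrow> real \<Rightarrow> real) \<Rightarrow> (real \<Rightarrow> real) \<Rightarrow> real \<Rightarrow> real set \<Rightarrow> bool" where
  "L2_deriv_within X D t S \<longleftrightarrow> D \<in> L2 \<and>
     ((\<lambda>s. L2norm (\<lambda>m. (X s m - X t m) / (s - t) - D m)) \<longlongrightarrow> 0) (at t within S)"

definition quantile :: "real measure \<Rightarrow> real \<Rightarrow> real" where
  "quantile \<mu> m = Inf {x. measure \<mu> {..x} > m}"

definition P2 :: "real measure \<Rightarrow> bool" where
  "P2 \<mu> \<longleftrightarrow> prob_space \<mu> \<and> sets \<mu> = sets borel \<and> integrable \<mu> (\<lambda>x. x^2)"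

definition dT2 :: "real measure \<Rightarrow> (real \<Rightarrow> real) \<Rightarrow> real measure \<Rightarrow> (real \<Rightarrow> real) \<Rightarrow> real" where
  "dT2 \<rho>1 v1 \<rho>2 v2 = sqrt ((L2norm (\<lambda>m. quantile \<rho>1 m - quantile \<rho>2 m))^2
      + (L2norm (\<lambda>m. v1 (quantile \<rho>1 m) - v2 (quantile \<rho>2 m)))^2)"

definition lagrangian_solution ::
  "real \<Rightarrow> real \<Rightarrow> real measure \<Rightarrow> (real \<Rightarrow> real) \<Rightarrow>
   (real \<Rightarrow> real \<Rightarrow> real) \<Rightarrow> (real \<Rightarrow> real \<Rightarrow> real) \<Rightarrow> bool" where
  "lagrangian_solution lam \<kappa> \<rho>0 v0 X U \<longleftrightarrow>
     (\<forall>t\<ge>0. X t \<in> Kcone) \<and>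
     (\<forall>T\<ge>0. \<exists>L. \<forall>s\<in>{0..T}. \<forall>t\<in>{0..T}. L2norm (\<lambda>m. X s m - X t m) \<le> L * \<bar>s - t\<bar>) \<and>
     (AE m in Om. X 0 m = quantile \<rho>0 m) \<and>
     (\<forall>t\<ge>0. U t \<in> L2) \<and>
     (AE m in Om. U 0 m = v0 (quantile \<rho>0 m)) \<and>
     (\<forall>t\<ge>0. L2_deriv_within U
        (\<lambda>m. - 2 * \<kappa> * U t m + lam^2 * (2 * m - 1 + (\<integral>\<omega>. X t \<omega> \<partial>Om) - X t m)) t {0..}) \<and>
     (AE t in lborel. t \<ge> 0 \<longrightarrow>
        (\<exists>D. L2_deriv_within X D t {0..} \<and> (\<lambda>m. U t m - D m) \<in> normal_cone (X t)))"

end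

theory Submission
  imports Defs
begin

text \<open>The proof is a Lyapunov argument in Lagrangian coordinates. The mean velocity
  \<open>\<integral>U\<close> decays like \<open>exp (- 2 * \<kappa> * t)\<close>, which determines the motion of the centre of mass
  \<open>\<integral>X\<close> towards \<open>xbar\<close>. For the deviations \<open>u = U - \<integral>U\<close> and \<open>x = X - (2 * m - 1) - \<integral>X\<close>
  from the steady state, the energy \<open>u\<^sup>2 / 2 + lam\<^sup>2 * x\<^sup>2 / 2 + \<kappa> * \<langle>x, u\<rangle>\<close> decays at least
  at rate \<open>2 * \<kappa>\<close>: at almost every time the velocity of \<open>X\<close> is \<open>U - W\<close> with \<open>W\<close> in the
  normal cone, and \<open>W\<close> is orthogonal to that velocity and to the constants and has a
  nonpositive inner product with \<open>2 * m - 1\<close>. Since \<open>\<kappa> < lam\<close>, the energy controls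
  both deviations, so \<open>x\<close>, \<open>U\<close> and the velocity of \<open>X\<close> decay like \<open>exp (- \<kappa> * t)\<close>; as \<open>X t\<close>
  is a.e.\ the monotone rearrangement of \<open>\<rho> t\<close>, this bounds \<open>dT2\<close>. The curve \<open>X\<close> is only
  Lipschitz, so the differential inequalities are integrated with a monotonicity lemma for
  Lipschitz functions whose derivative is nonpositive almost everywhere.\<close>

section \<open>The Hilbert space $L^2(0,1)$\<close>

lemma space_Om [simp]: "space Om = {0<..<1}"
  by (simp add: Om_def)

lemma sets_Om_iff: "A \<in> sets Om \<longleftrightarrow> A \<subseteq> {0<..<1} \<and> A \<in> sets lebesgue"
  unfolding Om_def by (subst sets_restrict_space_iff) auto

interpretation Om: prob_space Om
  by (rule prob_spaceI) (simp add: Om_def emeasure_restrict_space)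

lemma L2_measurable: "f \<in> L2 \<Longrightarrow> f \<in> borel_measurable Om"
  by (simp add: L2_def)

lemma integrable_L2_mult:
  assumes "f \<in> L2" "g \<in> L2"
  shows "integrable Om (\<lambda>m. f m * g m)"
proof (rule Bochner_Integration.integrable_bound)
  show "integrable Om (\<lambda>m. (f m)\<^sup>2 + (g m)\<^sup>2)"
    using assms by (auto simp: L2_def)
  show "(\<lambda>m. f m * g m) \<in> borel_measurable Om"
    using assms by (auto simp: L2_def)
  have "2 * \<bar>f m * g m\<bar> \<le> (f m)\<^sup>2 + (g m)\<^sup>2" for m
    using zero_le_power2[of "\<bar>f m\<bar> - \<bar>g m\<bar>"] by (simp add: power2_diff abs_mult)
  then have "\<bar>f m * g m\<bar> \<le> (f m)\<^sup>2 + (g m)\<^sup>2" for m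
    using abs_ge_zero[of "f m * g m"] by (smt (verit))
  then show "AE m in Om. norm (f m * g m) \<le> norm ((f m)\<^sup>2 + (g m)\<^sup>2)"
    by simp
qed

lemma integrable_L2: "f \<in> L2 \<Longrightarrow> integrable Om f"
  using integrable_L2_mult[of f "\<lambda>_. 1"] by (simp add: L2_def)

lemma L2_const [simp]: "(\<lambda>m. c) \<in> L2"
  by (simp add: L2_def)

lemma L2_ident [simp]: "(\<lambda>m. m) \<in> L2"
proof -
  have meas: "(\<lambda>m::real. m) \<in> borel_measurable Om"
    unfolding Om_def by (rule continuous_imp_measurable_on_sets_lebesgue) (auto intro: continuous_on_id)
  have "integrable Om (\<lambda>m::real. m\<^sup>2)"
    by (rule Bochner_Integration.integrable_bound[of _ "\<lambda>_. 1::real"])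
       (use meas in \<open>auto intro!: AE_I2 power_le_one\<close>)
  with meas show ?thesis
    by (simp add: L2_def)
qed

lemma L2_add [simp]:
  assumes "f \<in> L2" "g \<in> L2"
  shows "(\<lambda>m. f m + g m) \<in> L2"
proof -
  have "integrable Om (\<lambda>m. (f m)\<^sup>2 + (g m)\<^sup>2 + 2 * (f m * g m))"
    using assms integrable_L2_mult[OF assms] by (auto simp: L2_def)
  then show ?thesis
    using assms by (simp add: L2_def power2_sum algebra_simps borel_measurable_add)
qed

lemma L2_cmult [simp]: "f \<in> L2 \<Longrightarrow> (\<lambda>m. c * f m) \<in> L2"
  by (simp add: L2_def power_mult_distrib borel_measurable_times)

lemma L2_uminus [simp]: "f \<in> L2 \<Longrightarrow> (\<lambda>m. - f m) \<in> L2"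
  by (simp add: L2_def)

lemma L2_diff [simp]: "f \<in> L2 \<Longrightarrow> g \<in> L2 \<Longrightarrow> (\<lambda>m. f m - g m) \<in> L2"
  using L2_add[of f "\<lambda>m. - g m"] by simp

lemma L2_divide [simp]: "f \<in> L2 \<Longrightarrow> (\<lambda>m. f m / c) \<in> L2"
  using L2_cmult[of f "1 / c"] by simp

lemma L2inner_commute: "L2inner f g = L2inner g f"
  by (simp add: L2inner_def mult.commute)

lemma L2inner_add_left:
  "f \<in> L2 \<Longrightarrow> g \<in> L2 \<Longrightarrow> h \<in> L2 \<Longrightarrow> L2inner (\<lambda>m. f m + g m) h = L2inner f h + L2inner g h"
  by (simp add: L2inner_def distrib_right integrable_L2_mult)

lemma L2inner_diff_left:
  "f \<in> L2 \<Longrightarrow> g \<in> L2 \<Longrightarrow> h \<in> L2 \<Longrightarrow> L2inner (\<lambda>m. f m - g m) h = L2inner f h - L2inner g h"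
  by (simp add: L2inner_def left_diff_distrib integrable_L2_mult)

lemma L2inner_cmult_left: "L2inner (\<lambda>m. c * f m) h = c * L2inner f h"
  by (simp add: L2inner_def mult.assoc)

lemma L2inner_divide_left: "L2inner (\<lambda>m. f m / c) h = L2inner f h / c"
  by (simp add: L2inner_def)

lemma L2inner_add_right:
  "f \<in> L2 \<Longrightarrow> g \<in> L2 \<Longrightarrow> h \<in> L2 \<Longrightarrow> L2inner h (\<lambda>m. f m + g m) = L2inner h f + L2inner h g"
  by (simp add: L2inner_def distrib_left integrable_L2_mult)

lemma L2inner_diff_right:
  "f \<in> L2 \<Longrightarrow> g \<in> L2 \<Longrightarrow> h \<in> L2 \<Longrightarrow> L2inner h (\<lambda>m. f m - g m) = L2inner h f - L2inner h g"
  by (simp add: L2inner_def right_diff_distrib integrable_L2_mult)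

lemma L2inner_cmult_right: "L2inner h (\<lambda>m. c * f m) = c * L2inner h f"
  by (simp add: L2inner_def ac_simps)

lemma L2inner_divide_right: "L2inner h (\<lambda>m. f m / c) = L2inner h f / c"
  by (simp add: L2inner_def)

lemma L2inner_uminus_left: "L2inner (\<lambda>m. - f m) h = - L2inner f h"
  by (simp add: L2inner_def)

lemma L2inner_uminus_right: "L2inner h (\<lambda>m. - f m) = - L2inner h f"
  by (simp add: L2inner_def)

lemma L2inner_zero_right [simp]: "L2inner h (\<lambda>m. 0) = 0"
  by (simp add: L2inner_def)

lemmas L2inner_simps = L2inner_add_left L2inner_diff_left L2inner_cmult_left L2inner_divide_left
  L2inner_uminus_left L2inner_add_right L2inner_diff_right L2inner_cmult_right L2inner_divide_right
  L2inner_uminus_right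

lemma L2inner_one_one [simp]: "L2inner (\<lambda>m. 1) (\<lambda>m. 1) = 1"
  using Om.prob_space by (simp add: L2inner_def)

lemma L2inner_const_one [simp]: "L2inner (\<lambda>m. c) (\<lambda>m. 1) = c"
  using L2inner_cmult_left[of c "\<lambda>m. 1" "\<lambda>m. 1"] by simp

lemma integral_Om_eq_L2inner: "(\<integral>m. f m \<partial>Om) = L2inner f (\<lambda>m. 1)"
  by (simp add: L2inner_def)

lemma L2inner_self_nonneg: "0 \<le> L2inner f f"
  by (simp add: L2inner_def)

lemma L2norm_eq_sqrt_L2inner: "L2norm f = sqrt (L2inner f f)"
  by (simp add: L2norm_def L2inner_def power2_eq_square)

lemma L2norm_nonneg: "0 \<le> L2norm f"
  by (simp add: L2norm_eq_sqrt_L2inner L2inner_self_nonneg)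

lemma L2norm_power2: "(L2norm f)\<^sup>2 = L2inner f f"
  by (simp add: L2norm_eq_sqrt_L2inner L2inner_self_nonneg)

lemma L2norm_le_of_L2inner_self_le:
  assumes "L2inner f f \<le> c * L2norm f" "0 \<le> c"
  shows "L2norm f \<le> c"
proof (cases "L2norm f = 0")
  case False
  then have "L2norm f * L2norm f \<le> c * L2norm f"
    using assms(1) by (simp add: L2norm_power2[symmetric] power2_eq_square)
  with False show ?thesis
    using L2norm_nonneg[of f] by (simp add: mult_le_cancel_right)
qed (use assms in simp)

lemma quadratic_nonneg_imp_square_le:
  fixes a b c :: real
  assumes nonneg: "\<And>s. 0 \<le> a + 2 * b * s + c * s\<^sup>2" and "0 \<le> c"
  shows "b\<^sup>2 \<le> a * c"
proof (cases "c = 0")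
  case True
  have "b = 0"
  proof (rule ccontr)
    assume "b \<noteq> 0"
    then have "a + 2 * b * (- (a + 1) / (2 * b)) = -1"
      by (simp add: field_simps)
    with nonneg[of "- (a + 1) / (2 * b)"] True show False
      by simp
  qed
  with True show ?thesis by simp
next
  case False
  with \<open>0 \<le> c\<close> have "0 < c" by simp
  have "0 \<le> a + 2 * b * (- b / c) + c * (- b / c)\<^sup>2"
    by (rule nonneg)
  also have "\<dots> = a - b\<^sup>2 / c"
    using \<open>0 < c\<close> by (simp add: field_simps power2_eq_square)
  finally show ?thesis
    using \<open>0 < c\<close> by (simp add: field_simps mult.commute)
qed

lemma L2inner_abs_le:
  assumes "f \<in> L2" "g \<in> L2"
  shows "\<bar>L2inner f g\<bar> \<le> L2norm f * L2norm g"
proof -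
  have "L2inner (\<lambda>m. f m + s * g m) (\<lambda>m. f m + s * g m)
      = L2inner f f + 2 * L2inner f g * s + L2inner g g * s\<^sup>2" for s
    using assms by (simp add: L2inner_simps power2_eq_square L2inner_commute[of g f] algebra_simps)
  then have "(L2inner f g)\<^sup>2 \<le> L2inner f f * L2inner g g"
    by (intro quadratic_nonneg_imp_square_le) (metis L2inner_self_nonneg)+
  then have "\<bar>L2inner f g\<bar>\<^sup>2 \<le> (L2norm f * L2norm g)\<^sup>2"
    by (simp add: power_mult_distrib L2norm_power2)
  then show ?thesis
    by (rule power2_le_imp_le) (simp add: L2norm_nonneg)
qed

lemma L2norm_add_le:
  assumes "f \<in> L2" "g \<in> L2"
  shows "L2norm (\<lambda>m. f m + g m) \<le> L2norm f + L2norm g"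
proof -
  have "(L2norm (\<lambda>m. f m + g m))\<^sup>2 = L2inner f f + 2 * L2inner f g + L2inner g g"
    using assms by (simp add: L2norm_power2 L2inner_simps L2inner_commute[of g f])
  also have "\<dots> \<le> (L2norm f + L2norm g)\<^sup>2"
    using L2inner_abs_le[OF assms] by (simp add: L2norm_power2 power2_sum)
  finally show ?thesis
    by (rule power2_le_imp_le) (simp add: L2norm_nonneg)
qed

lemma L2norm_cmult: "L2norm (\<lambda>m. c * f m) = \<bar>c\<bar> * L2norm f"
  by (simp add: L2norm_eq_sqrt_L2inner L2inner_cmult_left L2inner_cmult_right
      real_sqrt_mult mult.assoc[symmetric])

lemma L2norm_uminus [simp]: "L2norm (\<lambda>m. - f m) = L2norm f"
  by (simp add: L2norm_def)

lemma L2norm_const [simp]: "L2norm (\<lambda>m. c) = \<bar>c\<bar>"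
  using L2norm_cmult[of c "\<lambda>m. 1"] by (simp add: L2norm_eq_sqrt_L2inner)

lemma L2norm_minus_commute: "L2norm (\<lambda>m. f m - g m) = L2norm (\<lambda>m. g m - f m)"
  by (simp add: L2norm_def power2_commute)

lemma L2norm_diff_le:
  "f \<in> L2 \<Longrightarrow> g \<in> L2 \<Longrightarrow> L2norm (\<lambda>m. f m - g m) \<le> L2norm f + L2norm g"
  using L2norm_add_le[of f "\<lambda>m. (- 1) * g m"] L2norm_cmult[of "- 1" g] by simp

lemma L2norm_le_diff_add:
  "f \<in> L2 \<Longrightarrow> g \<in> L2 \<Longrightarrow> L2norm f \<le> L2norm (\<lambda>m. f m - g m) + L2norm g"
  using L2norm_add_le[of "\<lambda>m. f m - g m" g] by simp

lemma L2norm_diff_const_le: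
  "f \<in> L2 \<Longrightarrow> L2norm (\<lambda>m. f m - c) \<le> L2norm f + \<bar>c\<bar>"
  using L2norm_diff_le[of f "\<lambda>m. c"] by simp

text \<open>Because of the junk value of a non-integrable integral, the norm of an $L^2$ function
  can only be compared from above with that of an a.e.\ equal function.\<close>
lemma L2norm_AE_le:
  assumes "f \<in> L2" "AE m in Om. g m = f m"
  shows "L2norm g \<le> L2norm f"
proof (cases "integrable Om (\<lambda>m. (g m)\<^sup>2)")
  case True
  then have "(\<integral>m. (g m)\<^sup>2 \<partial>Om) = (\<integral>m. (f m)\<^sup>2 \<partial>Om)"
    using assms by (intro integral_cong_AE) (auto simp: L2_def)
  then show ?thesis by (simp add: L2norm_def)
qed (simp add: L2norm_def not_integrable_integral_eq)

section \<open>Curves in $L^2(0,1)$\<close>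

lemma L2_deriv_within_L2: "L2_deriv_within A D t S \<Longrightarrow> D \<in> L2"
  by (simp add: L2_deriv_within_def)

lemma L2_deriv_within_tendsto:
  "L2_deriv_within A D t S \<Longrightarrow>
    ((\<lambda>s. L2norm (\<lambda>m. (A s m - A t m) / (s - t) - D m)) \<longlongrightarrow> 0) (at t within S)"
  by (simp add: L2_deriv_within_def)

lemma L2_deriv_within_subset: "L2_deriv_within A D t S \<Longrightarrow> T \<subseteq> S \<Longrightarrow> L2_deriv_within A D t T"
  unfolding L2_deriv_within_def by (auto intro: tendsto_within_subset)

lemma L2_deriv_within_const: "L2_deriv_within (\<lambda>s. f) (\<lambda>m. 0) t S"
  by (simp add: L2_deriv_within_def L2norm_def)

lemma L2norm_diff_eq_quotient:
  "s \<noteq> t \<Longrightarrow> L2norm (\<lambda>m. A s m - A t m) = \<bar>s - t\<bar> * L2norm (\<lambda>m. (A s m - A t m) / (s - t))"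
  using L2norm_cmult[of "s - t" "\<lambda>m. (A s m - A t m) / (s - t)"] by simp

lemma L2_deriv_within_tendsto_diff:
  assumes deriv: "L2_deriv_within A D t S" and "t \<in> S" and L2: "\<And>s. s \<in> S \<Longrightarrow> A s \<in> L2"
  shows "((\<lambda>s. L2norm (\<lambda>m. A s m - A t m)) \<longlongrightarrow> 0) (at t within S)"
proof (rule Lim_null_comparison)
  let ?q = "\<lambda>s. L2norm (\<lambda>m. (A s m - A t m) / (s - t) - D m)"
  show "\<forall>\<^sub>F s in at t within S. norm (L2norm (\<lambda>m. A s m - A t m)) \<le> \<bar>s - t\<bar> * (?q s + L2norm D)"
    unfolding eventually_at_filter
  proof (rule always_eventually, intro allI impI)
    fix s assume "s \<noteq> t" "s \<in> S"
    have "L2norm (\<lambda>m. (A s m - A t m) / (s - t)) \<le> ?q s + L2norm D"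
      using \<open>s \<in> S\<close> \<open>t \<in> S\<close> L2 L2_deriv_within_L2[OF deriv] by (intro L2norm_le_diff_add) auto
    then show "norm (L2norm (\<lambda>m. A s m - A t m)) \<le> \<bar>s - t\<bar> * (?q s + L2norm D)"
      using \<open>s \<noteq> t\<close> by (simp add: L2norm_diff_eq_quotient L2norm_nonneg mult_left_mono)
  qed
  have "((\<lambda>s. \<bar>s - t\<bar> * (?q s + L2norm D)) \<longlongrightarrow> \<bar>t - t\<bar> * (0 + L2norm D)) (at t within S)"
    by (intro tendsto_intros L2_deriv_within_tendsto[OF deriv])
  then show "((\<lambda>s. \<bar>s - t\<bar> * (?q s + L2norm D)) \<longlongrightarrow> 0) (at t within S)"
    by simp
qed

lemma L2inner_difference_quotient_le:
  assumes L2: "a1 \<in> L2" "a0 \<in> L2" "b1 \<in> L2" "b0 \<in> L2" "a' \<in> L2" "b' \<in> L2"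
  shows "\<bar>(L2inner a1 b1 - L2inner a0 b0) / h - (L2inner a' b0 + L2inner a0 b')\<bar>
    \<le> L2norm (\<lambda>m. (a1 m - a0 m) / h - a' m) * (L2norm b0 + L2norm (\<lambda>m. b1 m - b0 m))
      + L2norm a' * L2norm (\<lambda>m. b1 m - b0 m) + L2norm a0 * L2norm (\<lambda>m. (b1 m - b0 m) / h - b' m)"
proof -
  let ?T1 = "L2inner (\<lambda>m. (a1 m - a0 m) / h - a' m) b1"
  let ?T2 = "L2inner a' (\<lambda>m. b1 m - b0 m)"
  let ?T3 = "L2inner a0 (\<lambda>m. (b1 m - b0 m) / h - b' m)"
  have "(L2inner a1 b1 - L2inner a0 b0) / h - (L2inner a' b0 + L2inner a0 b') = ?T1 + ?T2 + ?T3"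
    using L2 by (simp add: L2inner_simps L2inner_commute[of a'] diff_divide_distrib)
  moreover have "\<bar>?T1\<bar> \<le> L2norm (\<lambda>m. (a1 m - a0 m) / h - a' m) * (L2norm b0 + L2norm (\<lambda>m. b1 m - b0 m))"
  proof -
    have "\<bar>?T1\<bar> \<le> L2norm (\<lambda>m. (a1 m - a0 m) / h - a' m) * L2norm b1"
      using L2 by (intro L2inner_abs_le) auto
    also have "\<dots> \<le> L2norm (\<lambda>m. (a1 m - a0 m) / h - a' m) * (L2norm b0 + L2norm (\<lambda>m. b1 m - b0 m))"
      using L2norm_le_diff_add[of b1 b0] L2 by (intro mult_left_mono) (auto simp: L2norm_nonneg)
    finally show ?thesis .
  qed
  moreover have "\<bar>?T2\<bar> \<le> L2norm a' * L2norm (\<lambda>m. b1 m - b0 m)"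
    using L2 by (intro L2inner_abs_le) auto
  moreover have "\<bar>?T3\<bar> \<le> L2norm a0 * L2norm (\<lambda>m. (b1 m - b0 m) / h - b' m)"
    using L2 by (intro L2inner_abs_le) auto
  ultimately show ?thesis
    using abs_triangle_ineq[of "?T1 + ?T2" ?T3] abs_triangle_ineq[of ?T1 ?T2] by linarith
qed

lemma L2inner_has_derivative:
  assumes dA: "L2_deriv_within A A' t S" and dB: "L2_deriv_within B B' t S" and "t \<in> S"
    and LA: "\<And>s. s \<in> S \<Longrightarrow> A s \<in> L2" and LB: "\<And>s. s \<in> S \<Longrightarrow> B s \<in> L2"
  shows "((\<lambda>s. L2inner (A s) (B s)) has_real_derivative L2inner A' (B t) + L2inner (A t) B')
    (at t within S)"
proof -
  define eA where "eA s = L2norm (\<lambda>m. (A s m - A t m) / (s - t) - A' m)" for s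
  define eB where "eB s = L2norm (\<lambda>m. (B s m - B t m) / (s - t) - B' m)" for s
  define dB where "dB s = L2norm (\<lambda>m. B s m - B t m)" for s
  let ?D = "L2inner A' (B t) + L2inner (A t) B'"
  let ?bound = "\<lambda>s. eA s * (L2norm (B t) + dB s) + L2norm A' * dB s + L2norm (A t) * eB s"
  have "(eA \<longlongrightarrow> 0) (at t within S)" "(eB \<longlongrightarrow> 0) (at t within S)" "(dB \<longlongrightarrow> 0) (at t within S)"
    unfolding eA_def eB_def dB_def
    by (rule L2_deriv_within_tendsto[OF dA] L2_deriv_within_tendsto[OF dB]
        L2_deriv_within_tendsto_diff[OF dB \<open>t \<in> S\<close> LB])+
  then have "(?bound \<longlongrightarrow> 0 * (L2norm (B t) + 0) + L2norm A' * 0 + L2norm (A t) * 0) (at t within S)"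
    by (intro tendsto_intros)
  then have "(?bound \<longlongrightarrow> 0) (at t within S)"
    by simp
  moreover have "norm ((L2inner (A s) (B s) - L2inner (A t) (B t)) / (s - t) - ?D) \<le> ?bound s"
    if "s \<in> S" for s
    unfolding eA_def eB_def dB_def real_norm_def
    using that \<open>t \<in> S\<close> LA LB L2_deriv_within_L2[OF dA] L2_deriv_within_L2[OF dB]
    by (intro L2inner_difference_quotient_le) auto
  then have "\<forall>\<^sub>F s in at t within S.
      norm ((L2inner (A s) (B s) - L2inner (A t) (B t)) / (s - t) - ?D) \<le> ?bound s"
    unfolding eventually_at_filter by (intro always_eventually allI impI)
  ultimately have "((\<lambda>s. (L2inner (A s) (B s) - L2inner (A t) (B t)) / (s - t) - ?D) \<longlongrightarrow> 0)
      (at t within S)"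
    by (rule Lim_null_comparison[rotated])
  then show ?thesis
    unfolding has_field_derivative_iff by (rule Lim_null[THEN iffD2])
qed

lemma L2_deriv_within_diff:
  assumes dA: "L2_deriv_within A D t S" and dg: "(g has_real_derivative g') (at t within S)"
    and "t \<in> S" and LA: "\<And>s. s \<in> S \<Longrightarrow> A s \<in> L2"
  shows "L2_deriv_within (\<lambda>s m. A s m - C m - g s) (\<lambda>m. D m - g') t S"
proof -
  have "D \<in> L2"
    using dA by (rule L2_deriv_within_L2)
  let ?gq = "\<lambda>s. (g s - g t) / (s - t) - g'"
  have gq: "(?gq \<longlongrightarrow> 0) (at t within S)"
    using dg unfolding has_field_derivative_iff by (rule Lim_null[THEN iffD1])
  let ?bound = "\<lambda>s. L2norm (\<lambda>m. (A s m - A t m) / (s - t) - D m) + \<bar>?gq s\<bar>"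
  have bound: "norm (L2norm (\<lambda>m. (A s m - C m - g s - (A t m - C m - g t)) / (s - t) - (D m - g')))
      \<le> ?bound s" if "s \<in> S" for s
  proof -
    have "(\<lambda>m. (A s m - C m - g s - (A t m - C m - g t)) / (s - t) - (D m - g'))
        = (\<lambda>m. ((A s m - A t m) / (s - t) - D m) - ?gq s)"
      unfolding diff_divide_distrib by (simp add: algebra_simps)
    moreover have "L2norm (\<lambda>m. ((A s m - A t m) / (s - t) - D m) - ?gq s) \<le> ?bound s"
      using that \<open>t \<in> S\<close> LA \<open>D \<in> L2\<close> by (intro L2norm_diff_const_le) auto
    ultimately show ?thesis
      by (simp add: L2norm_nonneg)
  qed
  have "(?bound \<longlongrightarrow> 0 + \<bar>0\<bar>) (at t within S)"
    by (intro tendsto_intros L2_deriv_within_tendsto[OF dA] gq)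
  then have "(?bound \<longlongrightarrow> 0) (at t within S)"
    by simp
  moreover have "\<forall>\<^sub>F s in at t within S.
      norm (L2norm (\<lambda>m. (A s m - C m - g s - (A t m - C m - g t)) / (s - t) - (D m - g'))) \<le> ?bound s"
    unfolding eventually_at_filter by (intro always_eventually allI impI bound)
  ultimately have "((\<lambda>s. L2norm (\<lambda>m. (A s m - C m - g s - (A t m - C m - g t)) / (s - t) - (D m - g')))
      \<longlongrightarrow> 0) (at t within S)"
    by (rule Lim_null_comparison[rotated])
  with \<open>D \<in> L2\<close> show ?thesis
    by (simp add: L2_deriv_within_def)
qed

lemma L2norm_le_of_right_deriv:
  assumes deriv: "L2_deriv_within A V t {t..}" and L2: "\<And>s. t \<le> s \<Longrightarrow> A s \<in> L2"
    and diff_le: "\<And>s. t < s \<Longrightarrow> L2norm (\<lambda>m. A s m - A t m) \<le> c * (s - t)"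
  shows "L2norm V \<le> c"
proof -
  let ?q = "\<lambda>s. (\<lambda>m. (A s m - A t m) / (s - t))"
  have "L2norm V \<le> L2norm (\<lambda>m. ?q s m - V m) + c" if "t < s" for s
  proof -
    have "L2norm V \<le> L2norm (\<lambda>m. V m - ?q s m) + L2norm (?q s)"
      using that L2 L2_deriv_within_L2[OF deriv] by (intro L2norm_le_diff_add) auto
    moreover have "L2norm (?q s) \<le> c"
      using diff_le[OF that] L2norm_diff_eq_quotient[of s t A] that by (simp add: mult.commute)
    ultimately show ?thesis
      by (simp add: L2norm_minus_commute[of V])
  qed
  then have "\<forall>\<^sub>F s in at t within {t..}. L2norm V \<le> L2norm (\<lambda>m. ?q s m - V m) + c"
    by (auto simp: eventually_at_filter intro!: always_eventually)
  moreover have "((\<lambda>s. L2norm (\<lambda>m. ?q s m - V m) + c) \<longlongrightarrow> 0 + c) (at t within {t..})"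
    by (intro tendsto_intros L2_deriv_within_tendsto[OF deriv])
  ultimately show ?thesis
    using tendsto_lowerbound[of _ "0 + c" "at t within {t..}" "L2norm V"]
    by (simp add: at_within_Ici_at_right)
qed

lemma continuous_on_L2norm_of_deriv:
  assumes deriv: "\<And>s. s \<in> S \<Longrightarrow> L2_deriv_within A (A' s) s S" and L2: "\<And>s. s \<in> S \<Longrightarrow> A s \<in> L2"
  shows "continuous_on S (\<lambda>s. L2norm (A s))"
  unfolding continuous_on_def
proof
  fix t assume "t \<in> S"
  have "norm (L2norm (A s) - L2norm (A t)) \<le> L2norm (\<lambda>m. A s m - A t m)" if "s \<in> S" for s
    using L2norm_le_diff_add[of "A s" "A t"] L2norm_le_diff_add[of "A t" "A s"]
      L2norm_minus_commute[of "A s" "A t"] L2 that \<open>t \<in> S\<close>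
    by (auto simp: abs_le_iff)
  then have "\<forall>\<^sub>F s in at t within S. norm (L2norm (A s) - L2norm (A t)) \<le> L2norm (\<lambda>m. A s m - A t m)"
    unfolding eventually_at_filter by (intro always_eventually allI impI)
  then have "((\<lambda>s. L2norm (A s) - L2norm (A t)) \<longlongrightarrow> 0) (at t within S)"
    by (rule Lim_null_comparison) (rule L2_deriv_within_tendsto_diff[OF deriv[OF \<open>t \<in> S\<close>] \<open>t \<in> S\<close> L2])
  then show "((\<lambda>s. L2norm (A s)) \<longlongrightarrow> L2norm (A t)) (at t within S)"
    by (rule Lim_null[THEN iffD2])
qed

section \<open>Lipschitz functions with an a.e.\ derivative\<close>

lemma continuous_on_compact_abs_bound:
  fixes f :: "'a::topological_space \<Rightarrow> real"
  assumes "compact S" "continuous_on S f"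
  obtains M where "0 < M" "\<And>x. x \<in> S \<Longrightarrow> \<bar>f x\<bar> \<le> M"
  using compact_imp_bounded[OF compact_continuous_image[OF assms(2,1)]] unfolding bounded_pos by auto

lemma lipschitz_on_mult_compact:
  fixes f g :: "'a::metric_space \<Rightarrow> real"
  assumes "compact S" and f: "Lf-lipschitz_on S f" and g: "Lg-lipschitz_on S g"
  obtains L where "L-lipschitz_on S (\<lambda>x. f x * g x)"
proof -
  obtain Mf where Mf: "0 < Mf" "\<And>x. x \<in> S \<Longrightarrow> \<bar>f x\<bar> \<le> Mf"
    using continuous_on_compact_abs_bound[OF \<open>compact S\<close> lipschitz_on_continuous_on[OF f]] by blast
  obtain Mg where Mg: "0 < Mg" "\<And>x. x \<in> S \<Longrightarrow> \<bar>g x\<bar> \<le> Mg"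
    using continuous_on_compact_abs_bound[OF \<open>compact S\<close> lipschitz_on_continuous_on[OF g]] by blast
  have "(Lf * Mg + Mf * Lg)-lipschitz_on S (\<lambda>x. f x * g x)"
  proof (rule lipschitz_onI)
    fix x y assume "x \<in> S" "y \<in> S"
    have "f x * g x - f y * g y = (f x - f y) * g x + f y * (g x - g y)"
      by (simp add: algebra_simps)
    then have "\<bar>f x * g x - f y * g y\<bar> \<le> \<bar>f x - f y\<bar> * \<bar>g x\<bar> + \<bar>f y\<bar> * \<bar>g x - g y\<bar>"
      by (metis abs_mult abs_triangle_ineq)
    also have "\<dots> \<le> (Lf * dist x y) * Mg + Mf * (Lg * dist x y)"
      using lipschitz_onD[OF f \<open>x \<in> S\<close> \<open>y \<in> S\<close>] lipschitz_onD[OF g \<open>x \<in> S\<close> \<open>y \<in> S\<close>]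
        Mf Mg \<open>x \<in> S\<close> \<open>y \<in> S\<close>
      by (intro add_mono mult_mono) (auto simp: dist_real_def)
    finally show "dist (f x * g x) (f y * g y) \<le> (Lf * Mg + Mf * Lg) * dist x y"
      by (simp add: dist_real_def algebra_simps)
  qed (use lipschitz_on_nonneg[OF f] lipschitz_on_nonneg[OF g] Mf Mg in simp)
  then show ?thesis ..
qed

lemma lipschitz_on_exp_Icc: "(\<bar>c\<bar> * exp (\<bar>c\<bar> * max \<bar>a\<bar> \<bar>b\<bar>))-lipschitz_on {a..b} (\<lambda>s. exp (c * s))"
proof (rule lipschitz_onI)
  fix x y :: real assume "x \<in> {a..b}" "y \<in> {a..b}"
  have "\<bar>c * exp (c * z)\<bar> \<le> \<bar>c\<bar> * exp (\<bar>c\<bar> * max \<bar>a\<bar> \<bar>b\<bar>)" if "z \<in> {a..b}" for z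
  proof -
    have "c * z \<le> \<bar>c\<bar> * \<bar>z\<bar>"
      by (metis abs_ge_self abs_mult)
    also have "\<dots> \<le> \<bar>c\<bar> * max \<bar>a\<bar> \<bar>b\<bar>"
      using that by (intro mult_left_mono) auto
    finally have "c * z \<le> \<bar>c\<bar> * max \<bar>a\<bar> \<bar>b\<bar>" .
    then show ?thesis
      by (simp add: abs_mult mult_left_mono)
  qed
  then have "norm (exp (c * x) - exp (c * y)) \<le> \<bar>c\<bar> * exp (\<bar>c\<bar> * max \<bar>a\<bar> \<bar>b\<bar>) * norm (x - y)"
    by (intro field_differentiable_bound[where f' = "\<lambda>s. c * exp (c * s)" and S = "{a..b}"])
       (use \<open>x \<in> {a..b}\<close> \<open>y \<in> {a..b}\<close> in \<open>auto intro!: derivative_eq_intros\<close>)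
  then show "dist (exp (c * x)) (exp (c * y)) \<le> \<bar>c\<bar> * exp (\<bar>c\<bar> * max \<bar>a\<bar> \<bar>b\<bar>) * dist x y"
    by (simp add: dist_real_def)
qed simp

lemma negligible_lipschitz_image:
  fixes f :: "real \<Rightarrow> real"
  assumes "L-lipschitz_on S f" "bounded S" "negligible S"
  shows "negligible (f ` S)"
proof (rule locally_Lipschitz_negl_bounded[of "L + 1"])
  fix x assume "x \<in> S"
  have "norm (f y - f x) \<le> (L + 1) * norm (y - x)" if "y \<in> S" for y
    using lipschitz_on_normD[OF assms(1) that \<open>x \<in> S\<close>] by (simp add: distrib_right)
  then show "\<exists>T. open T \<and> x \<in> T \<and> (\<forall>y\<in>S \<inter> T. norm (f y - f x) \<le> (L + 1) * norm (y - x))"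
    by blast
qed (use assms lipschitz_on_nonneg[OF assms(1)] in auto)

lemma last_crossing:
  fixes g :: "real \<Rightarrow> real"
  assumes cont: "continuous_on {a..b} g" and "a \<le> b" "g a \<le> y" "y < g b"
  obtains \<tau> where "\<tau> \<in> {a..<b}" "g \<tau> = y" "\<And>r. r \<in> {\<tau><..b} \<Longrightarrow> y < g r"
proof -
  define T where "T = {t \<in> {a..b}. g t = y}"
  have "T \<noteq> {}"
    using IVT'[of g a y b] assms unfolding T_def by fastforce
  moreover have "bdd_above T"
    unfolding T_def by (auto intro: bdd_aboveI[of _ b])
  moreover have "closed T"
    unfolding T_def by (rule continuous_closed_preimage_constant[OF cont]) simp
  ultimately have "Sup T \<in> T"
    by (rule closed_contains_Sup)
  then have \<tau>: "Sup T \<in> {a..b}" "g (Sup T) = y"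
    unfolding T_def by auto
  have above: "y < g r" if r: "r \<in> {Sup T<..b}" for r
  proof (rule ccontr)
    assume "\<not> y < g r"
    then obtain t where "r \<le> t" "t \<le> b" "g t = y"
      using IVT'[of g r y b] continuous_on_subset[OF cont, of "{r..b}"] r \<tau> \<open>y < g b\<close> by auto
    then have "t \<in> T"
      using r \<tau> unfolding T_def by auto
    then have "t \<le> Sup T"
      by (rule cSup_upper) (rule \<open>bdd_above T\<close>)
    with \<open>r \<le> t\<close> r show False
      by simp
  qed
  have "Sup T \<noteq> b"
    using \<tau> \<open>y < g b\<close> by auto
  with \<tau> above show ?thesis
    by (intro that[of "Sup T"]) auto
qed

text \<open>By the Luzin property of Lipschitz maps, some level between \<open>g a\<close> and \<open>g b\<close> is not
  attained on \<open>N\<close>; take its last crossing.\<close>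
lemma last_crossing_outside_null_set:
  fixes g :: "real \<Rightarrow> real"
  assumes "a \<le> b" and lip: "L-lipschitz_on {a..b} g" and "g a < g b" "negligible N"
  obtains \<tau> where "\<tau> \<in> {a<..<b}" "\<tau> \<notin> N" "\<And>r. r \<in> {\<tau><..b} \<Longrightarrow> g \<tau> < g r"
proof -
  define S where "S = {a..b} \<inter> N \<union> {a, b}"
  have "negligible (g ` S)"
  proof (rule negligible_lipschitz_image)
    show "L-lipschitz_on S g"
      by (rule lipschitz_on_subset[OF lip]) (auto simp: S_def \<open>a \<le> b\<close>)
    show "bounded S"
      by (rule bounded_subset[of "{a..b}"]) (auto simp: S_def \<open>a \<le> b\<close>)
    have "negligible ({a..b} \<inter> N)"
      by (rule negligible_subset[OF \<open>negligible N\<close>]) auto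
    then show "negligible S"
      unfolding S_def by (simp add: negligible_Un)
  qed
  moreover have "\<not> negligible {g a<..<g b}"
    using open_not_negligible[of "{g a<..<g b}"] \<open>g a < g b\<close> by simp
  ultimately obtain y where y: "y \<in> {g a<..<g b}" "y \<notin> g ` S"
    using negligible_subset by blast
  then have "g a \<le> y" "y < g b"
    by auto
  then obtain \<tau> where \<tau>: "\<tau> \<in> {a..<b}" "g \<tau> = y" "\<And>r. r \<in> {\<tau><..b} \<Longrightarrow> y < g r"
    by (rule last_crossing[OF lipschitz_on_continuous_on[OF lip] \<open>a \<le> b\<close>]) (rule that)
  with y show ?thesis
    by (intro that[of \<tau>]) (auto simp: S_def)
qed

lemma DERIV_nonpos_ae_imp_nonincreasing:
  fixes f :: "real \<Rightarrow> real"
  assumes "a \<le> b" and lip: "L-lipschitz_on {a..b} f" and "negligible N"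
    and deriv: "\<And>t. t \<in> {a<..<b} \<Longrightarrow> t \<notin> N \<Longrightarrow>
      \<exists>f'. (f has_real_derivative f') (at t within {a..b}) \<and> f' \<le> 0"
  shows "f b \<le> f a"
proof (rule ccontr)
  assume "\<not> f b \<le> f a"
  with \<open>a \<le> b\<close> have "a < b"
    by (cases "a = b") auto
  define \<eta> where "\<eta> = (f b - f a) / (2 * (b - a))"
  have "0 < \<eta>"
    using \<open>\<not> f b \<le> f a\<close> \<open>a < b\<close> by (simp add: \<eta>_def)
  define g where "g t = f t - \<eta> * t" for t
  have "\<eta> * (b - a) = (f b - f a) / 2"
    using \<open>a < b\<close> by (simp add: \<eta>_def field_simps)
  then have "g a < g b"
    using \<open>\<not> f b \<le> f a\<close> by (simp add: g_def algebra_simps)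
  moreover have "(L + \<bar>\<eta>\<bar> * 1)-lipschitz_on {a..b} g"
    unfolding g_def by (intro lipschitz_on_diff lip lipschitz_on_cmult_real lipschitz_on_id)
  ultimately obtain \<tau> where \<tau>: "\<tau> \<in> {a<..<b}" "\<tau> \<notin> N" "\<And>r. r \<in> {\<tau><..b} \<Longrightarrow> g \<tau> < g r"
    using last_crossing_outside_null_set[OF \<open>a \<le> b\<close> _ _ \<open>negligible N\<close>] by blast
  then obtain f' where f': "(f has_real_derivative f') (at \<tau> within {a..b})" "f' \<le> 0"
    using deriv by blast
  have "(g has_real_derivative f' - \<eta>) (at \<tau> within {a..b})"
    unfolding g_def using f'(1) by (auto intro!: derivative_eq_intros)
  moreover have "f' - \<eta> < 0"
    using f'(2) \<open>0 < \<eta>\<close> by simp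
  ultimately obtain d where "0 < d" and dec: "\<forall>h>0. \<tau> + h \<in> {a..b} \<longrightarrow> h < d \<longrightarrow> g \<tau> > g (\<tau> + h)"
    using has_real_derivative_neg_dec_right by blast
  define h where "h = min (d / 2) (b - \<tau>)"
  have "0 < h" "\<tau> + h \<in> {\<tau><..b}"
    using \<open>0 < d\<close> \<tau>(1) by (auto simp: h_def)
  then have "g \<tau> < g (\<tau> + h)"
    using \<tau>(3) by blast
  moreover have "g (\<tau> + h) < g \<tau>"
    using dec \<open>0 < h\<close> \<open>0 < d\<close> \<tau>(1) \<open>\<tau> + h \<in> {\<tau><..b}\<close> by (auto simp: h_def)
  ultimately show False
    by simp
qed

lemma DERIV_zero_ae_imp_constant:
  fixes f :: "real \<Rightarrow> real"
  assumes "a \<le> b" "L-lipschitz_on {a..b} f" "negligible N"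
    and deriv: "\<And>t. t \<in> {a<..<b} \<Longrightarrow> t \<notin> N \<Longrightarrow> (f has_real_derivative 0) (at t within {a..b})"
  shows "f b = f a"
proof -
  have "f b \<le> f a"
  proof (rule DERIV_nonpos_ae_imp_nonincreasing[OF assms(1-3)])
    fix t assume "t \<in> {a<..<b}" "t \<notin> N"
    with deriv show "\<exists>f'. (f has_real_derivative f') (at t within {a..b}) \<and> f' \<le> 0"
      by blast
  qed
  moreover have "- f b \<le> - f a"
  proof (rule DERIV_nonpos_ae_imp_nonincreasing[OF assms(1) lipschitz_on_minus[OF assms(2)] assms(3)])
    fix t assume "t \<in> {a<..<b}" "t \<notin> N"
    then have "((\<lambda>x. - f x) has_real_derivative - 0) (at t within {a..b})"
      by (intro DERIV_minus deriv)
    then show "\<exists>f'. ((\<lambda>x. - f x) has_real_derivative f') (at t within {a..b}) \<and> f' \<le> 0"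
      by auto
  qed
  ultimately show ?thesis
    by simp
qed

section \<open>Lipschitz curves in $L^2(0,1)$\<close>

definition L2_lipschitz_on :: "real \<Rightarrow> real set \<Rightarrow> (real \<Rightarrow> real \<Rightarrow> real) \<Rightarrow> bool" where
  "L2_lipschitz_on L S A \<longleftrightarrow> 0 \<le> L \<and> (\<forall>s\<in>S. A s \<in> L2) \<and>
     (\<forall>s\<in>S. \<forall>t\<in>S. L2norm (\<lambda>m. A s m - A t m) \<le> L * \<bar>s - t\<bar>)"

lemma L2_lipschitz_onD:
  assumes "L2_lipschitz_on L S A" "s \<in> S" "t \<in> S"
  shows "A s \<in> L2" "L2norm (\<lambda>m. A s m - A t m) \<le> L * \<bar>s - t\<bar>"
  using assms by (auto simp: L2_lipschitz_on_def)

lemma L2_lipschitz_on_const: "f \<in> L2 \<Longrightarrow> L2_lipschitz_on 0 S (\<lambda>s. f)"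
  by (simp add: L2_lipschitz_on_def)

lemma lipschitz_on_L2norm:
  assumes "L2_lipschitz_on L S A"
  shows "L-lipschitz_on S (\<lambda>s. L2norm (A s))"
proof (rule lipschitz_onI)
  fix s t assume "s \<in> S" "t \<in> S"
  have "L2norm (A s) \<le> L2norm (\<lambda>m. A s m - A t m) + L2norm (A t)"
    "L2norm (A t) \<le> L2norm (\<lambda>m. A t m - A s m) + L2norm (A s)"
    using L2_lipschitz_onD(1)[OF assms] \<open>s \<in> S\<close> \<open>t \<in> S\<close> by (auto intro: L2norm_le_diff_add)
  moreover have "L2norm (\<lambda>m. A s m - A t m) \<le> L * \<bar>s - t\<bar>" "L2norm (\<lambda>m. A t m - A s m) \<le> L * \<bar>s - t\<bar>"
    using L2_lipschitz_onD(2)[OF assms \<open>s \<in> S\<close> \<open>t \<in> S\<close>] L2_lipschitz_onD(2)[OF assms \<open>t \<in> S\<close> \<open>s \<in> S\<close>]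
    by (simp_all add: abs_minus_commute)
  ultimately show "dist (L2norm (A s)) (L2norm (A t)) \<le> L * dist s t"
    by (simp add: dist_real_def abs_le_iff)
qed (use assms in \<open>simp add: L2_lipschitz_on_def\<close>)

lemma L2_lipschitz_on_inner:
  assumes "compact S" and A: "L2_lipschitz_on LA S A" and B: "L2_lipschitz_on LB S B"
  obtains L where "L-lipschitz_on S (\<lambda>s. L2inner (A s) (B s))"
proof -
  obtain MA where MA: "0 < MA" "\<And>s. s \<in> S \<Longrightarrow> \<bar>L2norm (A s)\<bar> \<le> MA"
    using continuous_on_compact_abs_bound[OF \<open>compact S\<close> lipschitz_on_continuous_on[OF lipschitz_on_L2norm[OF A]]] by blast
  obtain MB where MB: "0 < MB" "\<And>s. s \<in> S \<Longrightarrow> \<bar>L2norm (B s)\<bar> \<le> MB"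
    using continuous_on_compact_abs_bound[OF \<open>compact S\<close> lipschitz_on_continuous_on[OF lipschitz_on_L2norm[OF B]]] by blast
  have "(LA * MB + MA * LB)-lipschitz_on S (\<lambda>s. L2inner (A s) (B s))"
  proof (rule lipschitz_onI)
    fix s t assume "s \<in> S" "t \<in> S"
    have L2s: "A s \<in> L2" "A t \<in> L2" "B s \<in> L2" "B t \<in> L2"
      using L2_lipschitz_onD(1)[OF A] L2_lipschitz_onD(1)[OF B] \<open>s \<in> S\<close> \<open>t \<in> S\<close> by auto
    have "L2inner (A s) (B s) - L2inner (A t) (B t)
        = L2inner (\<lambda>m. A s m - A t m) (B s) + L2inner (A t) (\<lambda>m. B s m - B t m)"
      using L2s by (simp add: L2inner_simps)
    then have "\<bar>L2inner (A s) (B s) - L2inner (A t) (B t)\<bar>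
        \<le> L2norm (\<lambda>m. A s m - A t m) * L2norm (B s) + L2norm (A t) * L2norm (\<lambda>m. B s m - B t m)"
      using L2inner_abs_le[of "\<lambda>m. A s m - A t m" "B s"] L2inner_abs_le[of "A t" "\<lambda>m. B s m - B t m"] L2s
      by auto
    also have "\<dots> \<le> (LA * dist s t) * MB + MA * (LB * dist s t)"
      using L2_lipschitz_onD(2)[OF A \<open>s \<in> S\<close> \<open>t \<in> S\<close>] L2_lipschitz_onD(2)[OF B \<open>s \<in> S\<close> \<open>t \<in> S\<close>]
        MA MB \<open>s \<in> S\<close> \<open>t \<in> S\<close> A
      by (intro add_mono mult_mono) (auto simp: dist_real_def L2norm_nonneg L2_lipschitz_on_def)
    finally show "dist (L2inner (A s) (B s)) (L2inner (A t) (B t)) \<le> (LA * MB + MA * LB) * dist s t"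
      by (simp add: dist_real_def algebra_simps)
  qed (use A B MA MB in \<open>simp add: L2_lipschitz_on_def\<close>)
  then show ?thesis ..
qed

lemma L2_lipschitz_on_diff:
  assumes A: "L2_lipschitz_on L S A" and "C \<in> L2" and g: "K-lipschitz_on S g"
  shows "L2_lipschitz_on (L + K) S (\<lambda>s m. A s m - C m - g s)"
  unfolding L2_lipschitz_on_def
proof (intro conjI ballI)
  show "0 \<le> L + K"
    using A lipschitz_on_nonneg[OF g] by (simp add: L2_lipschitz_on_def)
  fix s assume "s \<in> S"
  then show "(\<lambda>m. A s m - C m - g s) \<in> L2"
    using L2_lipschitz_onD(1)[OF A] \<open>C \<in> L2\<close> by simp
  fix t assume "t \<in> S"
  have "L2norm (\<lambda>m. A s m - C m - g s - (A t m - C m - g t)) = L2norm (\<lambda>m. (A s m - A t m) - (g s - g t))"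
    by (simp add: algebra_simps)
  also have "\<dots> \<le> L2norm (\<lambda>m. A s m - A t m) + \<bar>g s - g t\<bar>"
    using L2_lipschitz_onD(1)[OF A] \<open>s \<in> S\<close> \<open>t \<in> S\<close> by (intro L2norm_diff_const_le) simp
  also have "\<dots> \<le> L * \<bar>s - t\<bar> + K * \<bar>s - t\<bar>"
    using L2_lipschitz_onD(2)[OF A \<open>s \<in> S\<close> \<open>t \<in> S\<close>] lipschitz_onD[OF g \<open>s \<in> S\<close> \<open>t \<in> S\<close>]
    by (simp add: dist_real_def)
  finally show "L2norm (\<lambda>m. A s m - C m - g s - (A t m - C m - g t)) \<le> (L + K) * \<bar>s - t\<bar>"
    by (simp add: distrib_right)
qed

text \<open>Both bounds on the increment $e = A(s) - A(t)$ below come from the scalar function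
  $r \mapsto \langle A(r), e\rangle$, whose increment between $t$ and $s$ is $\|e\|^2$.\<close>
lemma L2_lipschitz_on_deriv_bound:
  assumes "convex S" and L2: "\<And>s. s \<in> S \<Longrightarrow> A s \<in> L2"
    and deriv: "\<And>s. s \<in> S \<Longrightarrow> L2_deriv_within A (A' s) s S"
    and bound: "\<And>s. s \<in> S \<Longrightarrow> L2norm (A' s) \<le> K" and "0 \<le> K"
  shows "L2_lipschitz_on K S A"
proof -
  have "L2norm (\<lambda>m. A s m - A t m) \<le> K * \<bar>s - t\<bar>" if "s \<in> S" "t \<in> S" for s t
  proof -
    define e where "e = (\<lambda>m. A s m - A t m)"
    have "e \<in> L2"
      using L2 that by (simp add: e_def)
    have "norm (L2inner (A s) e - L2inner (A t) e) \<le> (K * L2norm e) * norm (s - t)"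
    proof (rule field_differentiable_bound[OF \<open>convex S\<close>, where f' = "\<lambda>r. L2inner (A' r) e"])
      fix r assume "r \<in> S"
      have "((\<lambda>r. L2inner (A r) e) has_real_derivative L2inner (A' r) e + L2inner (A r) (\<lambda>m. 0))
          (at r within S)"
        by (rule L2inner_has_derivative[OF deriv[OF \<open>r \<in> S\<close>] L2_deriv_within_const \<open>r \<in> S\<close> L2])
           (use \<open>e \<in> L2\<close> in auto)
      then show "((\<lambda>r. L2inner (A r) e) has_field_derivative L2inner (A' r) e) (at r within S)"
        by simp
      have "\<bar>L2inner (A' r) e\<bar> \<le> L2norm (A' r) * L2norm e"
        using L2_deriv_within_L2[OF deriv[OF \<open>r \<in> S\<close>]] \<open>e \<in> L2\<close> by (rule L2inner_abs_le)
      also have "\<dots> \<le> K * L2norm e"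
        using bound[OF \<open>r \<in> S\<close>] by (rule mult_right_mono) (rule L2norm_nonneg)
      finally show "norm (L2inner (A' r) e) \<le> K * L2norm e"
        by simp
    qed (use that in auto)
    moreover have "L2inner (A s) e - L2inner (A t) e = L2inner e e"
      using L2 that \<open>e \<in> L2\<close> by (simp add: e_def L2inner_diff_left)
    ultimately have "L2inner e e \<le> (K * \<bar>s - t\<bar>) * L2norm e"
      by (simp add: mult_ac)
    then show ?thesis
      unfolding e_def by (rule L2norm_le_of_L2inner_self_le) (simp add: \<open>0 \<le> K\<close>)
  qed
  with L2 \<open>0 \<le> K\<close> show ?thesis
    by (simp add: L2_lipschitz_on_def)
qed

lemma L2norm_diff_le_of_deriv_ae:
  assumes lip: "L2_lipschitz_on L {a..b} A" and "a \<le> b" "0 \<le> K" "negligible N"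
    and deriv: "\<And>r. r \<in> {a<..<b} \<Longrightarrow> r \<notin> N \<Longrightarrow> \<exists>D. L2_deriv_within A D r {a..b} \<and> L2norm D \<le> K"
  shows "L2norm (\<lambda>m. A b m - A a m) \<le> K * (b - a)"
proof -
  have L2: "\<And>s. s \<in> {a..b} \<Longrightarrow> A s \<in> L2"
    using lip by (simp add: L2_lipschitz_on_def)
  define e where "e = (\<lambda>m. A b m - A a m)"
  have "e \<in> L2"
    using L2 \<open>a \<le> b\<close> by (simp add: e_def)
  obtain L' where "L'-lipschitz_on {a..b} (\<lambda>r. L2inner (A r) e)"
    using L2_lipschitz_on_inner[OF compact_Icc lip L2_lipschitz_on_const[OF \<open>e \<in> L2\<close>]] .
  then have lip': "(L' + \<bar>K * L2norm e\<bar> * 1)-lipschitz_on {a..b} (\<lambda>r. L2inner (A r) e - K * L2norm e * r)"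
    by (intro lipschitz_on_diff lipschitz_on_cmult_real lipschitz_on_id)
  have "L2inner (A b) e - K * L2norm e * b \<le> L2inner (A a) e - K * L2norm e * a"
  proof (rule DERIV_nonpos_ae_imp_nonincreasing[OF \<open>a \<le> b\<close> lip' \<open>negligible N\<close>])
    fix r assume r: "r \<in> {a<..<b}" "r \<notin> N"
    then obtain D where D: "L2_deriv_within A D r {a..b}" "L2norm D \<le> K"
      using deriv by blast
    have "((\<lambda>r. L2inner (A r) e - K * L2norm e * r) has_real_derivative
        L2inner D e + L2inner (A r) (\<lambda>m. 0) - K * L2norm e * 1) (at r within {a..b})"
      by (intro DERIV_diff DERIV_cmult DERIV_ident L2inner_has_derivative[OF D(1) L2_deriv_within_const])
         (use r L2 \<open>e \<in> L2\<close> in auto)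
    moreover have "L2inner D e \<le> K * L2norm e"
      using L2inner_abs_le[OF L2_deriv_within_L2[OF D(1)] \<open>e \<in> L2\<close>]
        mult_right_mono[OF D(2) L2norm_nonneg[of e]] by linarith
    ultimately show "\<exists>f'. ((\<lambda>r. L2inner (A r) e - K * L2norm e * r) has_real_derivative f')
        (at r within {a..b}) \<and> f' \<le> 0"
      by force
  qed
  moreover have "L2inner (A b) e - L2inner (A a) e = L2inner e e"
    using L2 \<open>a \<le> b\<close> \<open>e \<in> L2\<close> by (simp add: e_def L2inner_diff_left)
  ultimately have "L2inner e e \<le> (K * (b - a)) * L2norm e"
    by (simp add: algebra_simps)
  then show ?thesis
    unfolding e_def by (rule L2norm_le_of_L2inner_self_le) (use \<open>0 \<le> K\<close> \<open>a \<le> b\<close> in simp)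
qed

section \<open>The normal cone of the monotone maps\<close>

lemma Kcone_L2: "X \<in> Kcone \<Longrightarrow> X \<in> L2"
  by (simp add: Kcone_def)

lemma normal_cone_L2: "W \<in> normal_cone X \<Longrightarrow> W \<in> L2"
  by (simp add: normal_cone_def)

lemma normal_cone_L2inner_le:
  "W \<in> normal_cone X \<Longrightarrow> Y \<in> Kcone \<Longrightarrow> X \<in> L2 \<Longrightarrow> L2inner W Y \<le> L2inner W X"
  unfolding normal_cone_def using L2inner_diff_right[of Y X W] Kcone_L2[of Y] by auto

lemma normal_cone_L2inner_self:
  assumes "X \<in> Kcone" "W \<in> normal_cone X"
  shows "L2inner W X = 0"
proof -
  have "(\<lambda>m. 2 * X m) \<in> Kcone" "(\<lambda>m. 0) \<in> Kcone"
    using assms(1) by (auto simp: Kcone_def mono_on_def)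
  then have "2 * L2inner W X \<le> L2inner W X" "0 \<le> L2inner W X"
    using normal_cone_L2inner_le[OF assms(2) _ Kcone_L2[OF assms(1)], of "\<lambda>m. 2 * X m"]
      normal_cone_L2inner_le[OF assms(2) _ Kcone_L2[OF assms(1)], of "\<lambda>m. 0"]
    by (simp_all add: L2inner_cmult_right)
  then show ?thesis
    by linarith
qed

lemma normal_cone_L2inner_const:
  assumes "X \<in> Kcone" "W \<in> normal_cone X"
  shows "L2inner W (\<lambda>m. c) = 0"
proof -
  have "(\<lambda>m. X m + c) \<in> Kcone" "(\<lambda>m. X m - c) \<in> Kcone"
    using assms(1) by (auto simp: Kcone_def mono_on_def)
  then have "L2inner W X + L2inner W (\<lambda>m. c) \<le> L2inner W X" "L2inner W X - L2inner W (\<lambda>m. c) \<le> L2inner W X"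
    using normal_cone_L2inner_le[OF assms(2) _ Kcone_L2[OF assms(1)], of "\<lambda>m. X m + c"]
      normal_cone_L2inner_le[OF assms(2) _ Kcone_L2[OF assms(1)], of "\<lambda>m. X m - c"]
      Kcone_L2[OF assms(1)] normal_cone_L2[OF assms(2)]
    by (simp_all add: L2inner_add_right L2inner_diff_right)
  then show ?thesis
    by linarith
qed

lemma normal_cone_L2inner_nonpos:
  "X \<in> Kcone \<Longrightarrow> W \<in> normal_cone X \<Longrightarrow> Y \<in> Kcone \<Longrightarrow> L2inner W Y \<le> 0"
  using normal_cone_L2inner_le normal_cone_L2inner_self Kcone_L2 by fastforce

text \<open>The time \<open>t\<close> is an interior maximum of \<open>s \<mapsto> \<langle>X s, W\<rangle>\<close>.\<close>
lemma normal_cone_L2inner_deriv: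
  assumes "0 < t" and deriv: "L2_deriv_within X D t {0..}" and K: "\<And>s. 0 \<le> s \<Longrightarrow> X s \<in> Kcone"
    and W: "W \<in> normal_cone (X t)"
  shows "L2inner W D = 0"
proof -
  have "((\<lambda>s. L2inner (X s) W) has_real_derivative L2inner D W + L2inner (X t) (\<lambda>m. 0))
      (at t within {0..})"
    by (rule L2inner_has_derivative[OF deriv L2_deriv_within_const])
       (use \<open>0 < t\<close> K normal_cone_L2[OF W] in \<open>auto intro: Kcone_L2\<close>)
  then have "((\<lambda>s. L2inner (X s) W) has_real_derivative L2inner D W) (at t)"
    using at_within_interior[of t "{0..}"] \<open>0 < t\<close> by simp
  moreover have "L2inner (X s) W \<le> L2inner (X t) W" if "\<bar>t - s\<bar> < t" for s
    using normal_cone_L2inner_le[OF W K Kcone_L2[OF K]] that \<open>0 < t\<close>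
    by (simp add: L2inner_commute[of W])
  ultimately have "L2inner D W = 0"
    using DERIV_local_max \<open>0 < t\<close> by blast
  then show ?thesis
    by (simp add: L2inner_commute)
qed

section \<open>Monotone rearrangements\<close>

lemma borel_measurable_Om_mono_on:
  fixes f :: "real \<Rightarrow> real"
  assumes "mono_on {0<..<1} f"
  shows "f \<in> borel_measurable Om"
proof -
  have "sets (restrict_space borel {0<..<1::real}) \<subseteq> sets (lebesgue_on {0<..<1})"
    unfolding sets_restrict_space by (rule image_mono) (metis sets_lborel subsetI sets_completionI_sets)
  then show ?thesis
    unfolding Om_def
    by (rule borel_measurable_subalgebra[OF _ _ borel_measurable_mono_on_fnc[OF assms]]) simp
qed

lemma measure_Om_Ioo: "0 \<le> c \<Longrightarrow> c \<le> 1 \<Longrightarrow> measure Om {0<..<c} = c"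
  unfolding Om_def by (subst measure_restrict_space) auto

lemma measure_Om_Ioc: "0 \<le> c \<Longrightarrow> c < 1 \<Longrightarrow> measure Om {0<..c} = c"
  unfolding Om_def by (subst measure_restrict_space) auto

lemma cInf_eq_threshold:
  fixes a :: real
  assumes above: "\<And>y. a < y \<Longrightarrow> P y" and below: "\<And>y. y < a \<Longrightarrow> \<not> P y"
  shows "Inf {y. P y} = a"
proof (rule antisym)
  have lower: "a \<le> y" if "P y" for y
    using below that by (meson not_le)
  have "{y. P y} \<noteq> {}"
    using above[of "a + 1"] by auto
  then show "a \<le> Inf {y. P y}"
    by (rule cInf_greatest) (auto intro: lower)
  show "Inf {y. P y} \<le> a"
  proof (rule field_le_epsilon)
    fix e :: real assume "0 < e"
    then show "Inf {y. P y} \<le> a + e"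
      by (intro cInf_lower bdd_belowI[of _ a]) (auto intro: above lower)
  qed
qed

context real_distribution
begin

lemma quantile_eq_Inf_cdf: "quantile M m = Inf {x. m < cdf M x}"
  by (simp add: quantile_def cdf_def)

lemma cdf_superlevel_nonempty_bdd_below:
  assumes "m \<in> {0<..<1}"
  shows "{x. m < cdf M x} \<noteq> {}" "bdd_below {x. m < cdf M x}"
proof -
  show "{x. m < cdf M x} \<noteq> {}"
    using order_tendstoD(1)[OF cdf_lim_at_top_prob, of m] assms
    by (auto dest!: eventually_happens'[OF trivial_limit_at_top_linorder])
  obtain y where y: "cdf M y < m"
    using order_tendstoD(2)[OF cdf_lim_at_bot, of m] assms
    by (auto dest!: eventually_happens'[OF trivial_limit_at_bot_linorder])
  show "bdd_below {x. m < cdf M x}"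
  proof (rule bdd_belowI[of _ y])
    fix x assume "x \<in> {x. m < cdf M x}"
    with y show "y \<le> x"
      using cdf_nondecreasing[of x y] by (cases "x \<le> y") auto
  qed
qed

lemma quantile_le_of_less_cdf: "m \<in> {0<..<1} \<Longrightarrow> m < cdf M x \<Longrightarrow> quantile M m \<le> x"
  unfolding quantile_eq_Inf_cdf by (rule cInf_lower[OF _ cdf_superlevel_nonempty_bdd_below(2)]) auto

lemma le_cdf_of_quantile_le:
  assumes m: "m \<in> {0<..<1}" and "quantile M m \<le> x"
  shows "m \<le> cdf M x"
proof (rule ccontr)
  assume "\<not> m \<le> cdf M x"
  then have "\<forall>\<^sub>F z in at_right x. cdf M z < m"
    using cdf_is_right_cont[of x] by (intro order_tendstoD(2)) (auto simp: continuous_within)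
  then obtain b where "x < b" and b: "\<And>z. x < z \<Longrightarrow> z < b \<Longrightarrow> cdf M z < m"
    unfolding eventually_at_right[of x "x + 1", simplified] by blast
  have "(x + b) / 2 \<le> quantile M m"
    unfolding quantile_eq_Inf_cdf
  proof (rule cInf_greatest[OF cdf_superlevel_nonempty_bdd_below(1)[OF m]])
    fix w assume "w \<in> {x. m < cdf M x}"
    then show "(x + b) / 2 \<le> w"
      using b[of "(x + b) / 2"] \<open>x < b\<close> cdf_nondecreasing[of w "(x + b) / 2"] by (cases "w \<le> (x + b) / 2") auto
  qed
  with \<open>quantile M m \<le> x\<close> \<open>x < b\<close> show False
    by simp
qed

lemma mono_on_quantile: "mono_on {0<..<1} (quantile M)"
proof (rule mono_onI)
  fix r s :: real assume "r \<in> {0<..<1}" "s \<in> {0<..<1}" "r \<le> s"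
  then show "quantile M r \<le> quantile M s"
    unfolding quantile_eq_Inf_cdf[of s]
    by (intro cInf_greatest[OF cdf_superlevel_nonempty_bdd_below(1)] quantile_le_of_less_cdf) auto
qed

lemma distr_Om_quantile: "distr Om borel (quantile M) = M"
proof -
  have meas: "quantile M \<in> borel_measurable Om"
    by (rule borel_measurable_Om_mono_on[OF mono_on_quantile])
  have "cdf (distr Om borel (quantile M)) x = cdf M x" for x
  proof -
    let ?A = "{m \<in> {0<..<1}. quantile M m \<le> x}"
    have cdf_distr: "cdf (distr Om borel (quantile M)) x = measure Om ?A"
      unfolding cdf_def using meas by (subst measure_distr) (auto simp: vimage_def Int_def conj_commute)
    have "?A \<in> sets Om"
      using measurable_sets[OF meas, of "{..x}"] by (simp add: vimage_def Int_def conj_commute)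
    have c: "0 \<le> cdf M x" "cdf M x \<le> 1"
      using cdf_nonneg cdf_bounded_prob by auto
    have "cdf M x = measure Om {0<..<cdf M x}"
      using measure_Om_Ioo[OF c] by simp
    also have "\<dots> \<le> measure Om ?A"
      using quantile_le_of_less_cdf c by (intro Om.finite_measure_mono \<open>?A \<in> sets Om\<close>) auto
    finally have "cdf M x \<le> measure Om ?A" .
    moreover have "measure Om ?A \<le> cdf M x"
    proof (cases "cdf M x < 1")
      case True
      have "?A \<subseteq> {0<..cdf M x}"
        using le_cdf_of_quantile_le by auto
      then have "measure Om ?A \<le> measure Om {0<..cdf M x}"
        using True by (intro Om.finite_measure_mono) (auto simp: sets_Om_iff)
      then show ?thesis
        using measure_Om_Ioc[OF c(1) True] by simp
    qed (use Om.prob_le_1[of ?A] c in simp)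
    ultimately show ?thesis
      using cdf_distr by simp
  qed
  then show ?thesis
    using real_distribution_axioms meas by (intro cdf_unique Om.real_distribution_distr) auto
qed

end

lemma measure_Om_sublevel_gt:
  fixes Y :: "real \<Rightarrow> real"
  assumes meas: "Y \<in> borel_measurable Om" and mono: "mono_on {0<..<1} Y"
    and m: "m \<in> {0<..<1}" and cont: "isCont Y m" and "Y m < y"
  shows "m < measure Om {w \<in> {0<..<1}. Y w \<le> y}"
proof -
  have "\<forall>\<^sub>F w in at_right m. Y w < y"
    using cont \<open>Y m < y\<close> by (intro order_tendstoD(2)) (auto simp: isCont_def filterlim_at_split)
  then obtain b where "m < b" and b: "\<And>w. m < w \<Longrightarrow> w < b \<Longrightarrow> Y w < y"
    unfolding eventually_at_right[of m "m + 1", simplified] by blast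
  define r where "r = min b 1"
  have "{0<..<r} \<subseteq> {w \<in> {0<..<1}. Y w \<le> y}"
  proof
    fix w assume w: "w \<in> {0<..<r}"
    show "w \<in> {w \<in> {0<..<1}. Y w \<le> y}"
    proof (cases "w \<le> m")
      case True
      then show ?thesis
        using mono_onD[OF mono _ m True] w \<open>Y m < y\<close> by (auto simp: r_def)
    next
      case False
      with b[of w] w show ?thesis
        by (auto simp: r_def)
    qed
  qed
  moreover have "{w \<in> {0<..<1}. Y w \<le> y} \<in> sets Om"
    using measurable_sets[OF meas, of "{..y}"] by (simp add: vimage_def Int_def conj_commute)
  ultimately have "measure Om {0<..<r} \<le> measure Om {w \<in> {0<..<1}. Y w \<le> y}"
    by (rule Om.finite_measure_mono)
  then show ?thesis
    using measure_Om_Ioo[of r] \<open>m < b\<close> m by (auto simp: r_def)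
qed

lemma measure_Om_sublevel_lt:
  fixes Y :: "real \<Rightarrow> real"
  assumes mono: "mono_on {0<..<1} Y" and m: "m \<in> {0<..<1}" and "y < Y m"
  shows "measure Om {w \<in> {0<..<1}. Y w \<le> y} \<le> m"
proof -
  have "{w \<in> {0<..<1}. Y w \<le> y} \<subseteq> {0<..m}"
    using mono_onD[OF mono m] \<open>y < Y m\<close> by (force simp: not_le[symmetric])
  then have "measure Om {w \<in> {0<..<1}. Y w \<le> y} \<le> measure Om {0<..m}"
    using m by (intro Om.finite_measure_mono) (auto simp: sets_Om_iff)
  then show ?thesis
    using measure_Om_Ioc[of m] m by simp
qed

lemma quantile_distr_mono_on:
  fixes Y :: "real \<Rightarrow> real"
  assumes meas: "Y \<in> borel_measurable Om" and mono: "mono_on {0<..<1} Y"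
    and m: "m \<in> {0<..<1}" and cont: "isCont Y m"
  shows "quantile (distr Om borel Y) m = Y m"
proof -
  have "measure (distr Om borel Y) {..y} = measure Om {w \<in> {0<..<1}. Y w \<le> y}" for y
    using meas by (subst measure_distr) (auto simp: vimage_def Int_def conj_commute)
  then show ?thesis
    unfolding quantile_def
    using measure_Om_sublevel_gt[OF assms] measure_Om_sublevel_lt[OF mono m]
    by (intro cInf_eq_threshold) (auto simp: not_less)
qed

lemma AE_Om_isCont_mono_on:
  fixes Y :: "real \<Rightarrow> real"
  assumes "mono_on {0<..<1} Y"
  shows "AE m in Om. isCont Y m"
proof -
  let ?D = "{a \<in> {0<..<1}. \<not> continuous (at a within {0<..<1}) Y}"
  have "countable ?D"
    by (rule mono_on_ctble_discont[OF assms])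
  then have "AE m in lborel. m \<notin> ?D"
    by (intro AE_I'[OF countable_imp_null_set_lborel]) auto
  then have "AE m in Om. m \<notin> ?D"
    unfolding Om_def by (subst AE_restrict_space_iff) (auto dest: AE_completion intro: AE_mp)
  moreover have "AE m in Om. m \<in> {0<..<1}"
    by (rule AE_I2) simp
  ultimately show ?thesis
    by eventually_elim (auto simp: at_within_open[of _ "{0<..<1}"] continuous_def isCont_def)
qed

lemma emeasure_uniform_density_atMost:
  "emeasure (density lborel (\<lambda>x. ennreal (indicator {c - 1<..<c + 1} x / 2))) {..y}
    = ennreal (if y \<le> c - 1 then 0 else if y < c + 1 then (y - c + 1) / 2 else 1)"
proof -
  let ?I = "{c - 1<..<c + 1}"
  have "emeasure (density lborel (\<lambda>x. ennreal (indicator ?I x / 2))) {..y}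
      = (\<integral>\<^sup>+ x. ennreal (1 / 2) * indicator (?I \<inter> {..y}) x \<partial>lborel)"
    by (subst emeasure_density) (auto intro!: nn_integral_cong split: split_indicator)
  also have "\<dots> = ennreal (1 / 2) * emeasure lborel (?I \<inter> {..y})"
    by (simp add: nn_integral_cmult_indicator)
  also have "\<dots> = ennreal (if y \<le> c - 1 then 0 else if y < c + 1 then (y - c + 1) / 2 else 1)"
  proof -
    consider "y \<le> c - 1" | "c - 1 < y" "y < c + 1" | "c + 1 \<le> y"
      by linarith
    then show ?thesis
    proof cases
      case 1
      then have "?I \<inter> {..y} = {}"
        by auto
      with 1 show ?thesis
        by simp
    next
      case 2
      then have "?I \<inter> {..y} = {c - 1<..y}"
        by auto
      then have "ennreal (1 / 2) * emeasure lborel (?I \<inter> {..y}) = ennreal (1 / 2) * ennreal (y - (c - 1))"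
        using 2 by simp
      also have "\<dots> = ennreal ((y - c + 1) / 2)"
        using 2 by (subst ennreal_mult[symmetric]) auto
      finally show ?thesis
        using 2 by simp
    next
      case 3
      then have "?I \<inter> {..y} = ?I"
        by auto
      then have "ennreal (1 / 2) * emeasure lborel (?I \<inter> {..y}) = ennreal (1 / 2) * ennreal 2"
        by simp
      also have "\<dots> = ennreal 1"
        by (subst ennreal_mult[symmetric]) auto
      finally show ?thesis
        using 3 by simp
    qed
  qed
  finally show ?thesis .
qed

lemma quantile_uniform_density:
  assumes "m \<in> {0<..<1}"
  shows "quantile (density lborel (\<lambda>x. ennreal (indicator {c - 1<..<c + 1} x / 2))) m = c - 1 + 2 * m"
proof -
  have "measure (density lborel (\<lambda>x. ennreal (indicator {c - 1<..<c + 1} x / 2))) {..y}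
      = (if y \<le> c - 1 then 0 else if y < c + 1 then (y - c + 1) / 2 else 1)" for y
    by (simp add: measure_def emeasure_uniform_density_atMost)
  with assms show ?thesis
    unfolding quantile_def by (intro cInf_eq_threshold) auto
qed

section \<open>Exponential decay of the Lagrangian solution\<close>

lemma L2inner_two_m_minus_one: "L2inner (\<lambda>m. 2 * m - 1) (\<lambda>m. 1) = 0"
proof -
  have "((\<lambda>x::real. 2 * x - 1) has_integral ((1\<^sup>2 - 1) - (0\<^sup>2 - 0))) {0..1}"
    by (rule fundamental_theorem_of_calculus)
       (auto intro!: derivative_eq_intros simp: has_real_derivative_iff_has_vector_derivative[symmetric])
  then have "integral {0..1} (\<lambda>x::real. 2 * x - 1) = 0"
    by (simp add: integral_unique)
  then have "integral {0<..<1} (\<lambda>x::real. 2 * x - 1) = 0"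
    by (simp add: integral_open_interval_real)
  moreover have "(\<integral>m. 2 * m - 1 \<partial>Om) = integral {0<..<1} (\<lambda>x::real. 2 * x - 1)"
    using integrable_L2[of "\<lambda>m. 2 * m - 1"] unfolding Om_def
    by (intro lebesgue_integral_eq_integral) auto
  ultimately show ?thesis
    by (simp add: L2inner_def)
qed

lemma quadratic_form_lower_bound:
  fixes a b p lam \<kappa> :: real
  assumes "\<bar>p\<bar> \<le> a * b" "0 \<le> a" "0 \<le> b" "0 < \<kappa>" "\<kappa> < lam"
  shows "(1 - \<kappa> / lam) / 2 * (a\<^sup>2 + lam\<^sup>2 * b\<^sup>2) \<le> a\<^sup>2 / 2 + lam\<^sup>2 * b\<^sup>2 / 2 + \<kappa> * p"
proof -
  define S where "S = a\<^sup>2 + lam\<^sup>2 * b\<^sup>2"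
  define r where "r = \<kappa> / lam"
  have "2 * lam * (a * b) \<le> S"
    using zero_le_power2[of "a - lam * b"] by (simp add: S_def power2_diff power_mult_distrib algebra_simps)
  then have "\<kappa> * (a * b) \<le> r * (S / 2)"
    using assms by (simp add: r_def field_simps)
  moreover have "- (\<kappa> * (a * b)) \<le> \<kappa> * p"
    using assms(1,4) mult_left_mono[of "- (a * b)" p \<kappa>] by (simp add: abs_le_iff)
  moreover have "(1 - r) / 2 * S = S / 2 - r * (S / 2)"
    by (simp add: field_simps)
  ultimately have "(1 - r) / 2 * S \<le> a\<^sup>2 / 2 + lam\<^sup>2 * b\<^sup>2 / 2 + \<kappa> * p"
    using S_def by linarith
  then show ?thesis
    unfolding S_def r_def .
qed

text \<open>The time derivative of the energy for $u' = -2\kappa u - \lambda^2 x$ and $x' = u - W$;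
  everything except the terms in $W$ cancels.\<close>
lemma energy_derivative_identity:
  fixes \<kappa> lam :: real
  assumes "u \<in> L2" "x \<in> L2" "W \<in> L2"
  shows "(1/2) * (L2inner (\<lambda>m. - 2 * \<kappa> * u m - lam\<^sup>2 * x m) u + L2inner u (\<lambda>m. - 2 * \<kappa> * u m - lam\<^sup>2 * x m))
      + (lam\<^sup>2/2) * (L2inner (\<lambda>m. u m - W m) x + L2inner x (\<lambda>m. u m - W m))
      + \<kappa> * (L2inner (\<lambda>m. u m - W m) u + L2inner x (\<lambda>m. - 2 * \<kappa> * u m - lam\<^sup>2 * x m))
      + 2 * \<kappa> * ((1/2) * L2inner u u + (lam\<^sup>2/2) * L2inner x x + \<kappa> * L2inner x u)
    = - lam\<^sup>2 * L2inner W x - \<kappa> * L2inner W u"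
  using assms L2inner_commute[of u x] L2inner_commute[of W x] L2inner_commute[of W u]
  by (simp add: L2inner_simps) (simp add: field_simps)

locale lagrangian_flow =
  fixes lam \<kappa> :: real and \<rho>0 :: "real measure" and v0 :: "real \<Rightarrow> real"
    and X U :: "real \<Rightarrow> real \<Rightarrow> real"
  assumes kappa_pos: "0 < \<kappa>" and kappa_less: "\<kappa> < lam"
    and rho0: "real_distribution \<rho>0" and v0_measurable: "v0 \<in> borel_measurable borel"
    and solution: "lagrangian_solution lam \<kappa> \<rho>0 v0 X U"
begin

definition x0bar :: real where "x0bar = (\<integral>x. x \<partial>\<rho>0)"
definition v0bar :: real where "v0bar = (\<integral>x. v0 x \<partial>\<rho>0)"
definition xbar :: real where "xbar = x0bar + (1 / (2 * \<kappa>)) * v0bar"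

definition center :: "real \<Rightarrow> real" where "center t = L2inner (X t) (\<lambda>m. 1)"
definition mean_velocity :: "real \<Rightarrow> real" where "mean_velocity t = L2inner (U t) (\<lambda>m. 1)"

text \<open>Deviations from the steady state; \<open>2 * m - 1\<close> is the monotone rearrangement of the
  uniform distribution on \<open>(-1, 1)\<close>.\<close>
definition Xdev :: "real \<Rightarrow> real \<Rightarrow> real" where "Xdev t = (\<lambda>m. X t m - (2 * m - 1) - center t)"
definition Udev :: "real \<Rightarrow> real \<Rightarrow> real" where "Udev t = (\<lambda>m. U t m - mean_velocity t)"

definition energy :: "real \<Rightarrow> real" where
  "energy t = (1/2) * L2inner (Udev t) (Udev t) + (lam\<^sup>2/2) * L2inner (Xdev t) (Xdev t)
    + \<kappa> * L2inner (Xdev t) (Udev t)"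

definition regular :: "real \<Rightarrow> bool" where
  "regular t \<longleftrightarrow> (\<exists>D. L2_deriv_within X D t {0..} \<and> (\<lambda>m. U t m - D m) \<in> normal_cone (X t))"

lemma X_Kcone: "0 \<le> t \<Longrightarrow> X t \<in> Kcone"
  using solution by (simp add: lagrangian_solution_def)

lemma X_L2 [simp]: "0 \<le> t \<Longrightarrow> X t \<in> L2"
  using X_Kcone Kcone_L2 by blast

lemma U_L2 [simp]: "0 \<le> t \<Longrightarrow> U t \<in> L2"
  using solution by (simp add: lagrangian_solution_def)

lemma Xdev_L2 [simp]: "0 \<le> t \<Longrightarrow> Xdev t \<in> L2"
  by (simp add: Xdev_def)

lemma Udev_L2 [simp]: "0 \<le> t \<Longrightarrow> Udev t \<in> L2"
  by (simp add: Udev_def)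

lemma Xdev_mean: "0 \<le> t \<Longrightarrow> L2inner (Xdev t) (\<lambda>m. 1) = 0"
  by (simp add: Xdev_def L2inner_simps L2inner_two_m_minus_one center_def)

lemma U_deriv:
  assumes "0 \<le> t"
  shows "L2_deriv_within U (\<lambda>m. - 2 * \<kappa> * U t m - lam\<^sup>2 * Xdev t m) t {0..}"
proof -
  have "L2_deriv_within U (\<lambda>m. - 2 * \<kappa> * U t m + lam\<^sup>2 * (2 * m - 1 + (\<integral>\<omega>. X t \<omega> \<partial>Om) - X t m))
      t {0..}"
    using solution assms unfolding lagrangian_solution_def by blast
  moreover have "(\<lambda>m. - 2 * \<kappa> * U t m + lam\<^sup>2 * (2 * m - 1 + (\<integral>\<omega>. X t \<omega> \<partial>Om) - X t m))
      = (\<lambda>m. - 2 * \<kappa> * U t m - lam\<^sup>2 * Xdev t m)"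
    by (simp add: Xdev_def center_def integral_Om_eq_L2inner algebra_simps)
  ultimately show ?thesis
    by simp
qed

lemma X_lipschitz:
  assumes "0 \<le> a"
  obtains L where "L2_lipschitz_on L {a..b} X"
proof -
  obtain L where L: "\<forall>s\<in>{0..max b 0}. \<forall>t\<in>{0..max b 0}. L2norm (\<lambda>m. X s m - X t m) \<le> L * \<bar>s - t\<bar>"
    using solution unfolding lagrangian_solution_def by (meson max.cobounded2)
  have "L2_lipschitz_on (max L 0) {a..b} X"
    unfolding L2_lipschitz_on_def
  proof (intro conjI ballI)
    fix s t assume "s \<in> {a..b}" "t \<in> {a..b}"
    with L \<open>0 \<le> a\<close> have "L2norm (\<lambda>m. X s m - X t m) \<le> L * \<bar>s - t\<bar>"
      by auto
    also have "\<dots> \<le> max L 0 * \<bar>s - t\<bar>"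
      by (intro mult_right_mono) auto
    finally show "L2norm (\<lambda>m. X s m - X t m) \<le> max L 0 * \<bar>s - t\<bar>" .
  qed (use \<open>0 \<le> a\<close> in auto)
  then show ?thesis ..
qed

lemma center_lipschitz:
  assumes "0 \<le> a"
  obtains L where "L-lipschitz_on {a..b} center"
proof -
  obtain LX where "L2_lipschitz_on LX {a..b} X"
    using X_lipschitz[OF assms] .
  then obtain L where "L-lipschitz_on {a..b} (\<lambda>s. L2inner (X s) (\<lambda>m. 1))"
    using L2_lipschitz_on_inner[OF compact_Icc _ L2_lipschitz_on_const[OF L2_const]] by blast
  then show ?thesis
    by (intro that) (simp add: center_def[abs_def])
qed

lemma Xdev_lipschitz:
  assumes "0 \<le> a"
  obtains L where "L2_lipschitz_on L {a..b} Xdev"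
proof -
  obtain LX Lc where "L2_lipschitz_on LX {a..b} X" "Lc-lipschitz_on {a..b} center"
    using X_lipschitz[OF assms] center_lipschitz[OF assms] by metis
  then have "L2_lipschitz_on (LX + Lc) {a..b} (\<lambda>s m. X s m - (2 * m - 1) - center s)"
    by (intro L2_lipschitz_on_diff) auto
  then have "L2_lipschitz_on (LX + Lc) {a..b} Xdev"
    by (simp add: Xdev_def[abs_def])
  then show ?thesis
    by (rule that)
qed

lemma U_lipschitz:
  assumes "0 \<le> a"
  obtains L where "L2_lipschitz_on L {a..b} U"
proof -
  have deriv: "L2_deriv_within U (\<lambda>m. - 2 * \<kappa> * U s m - lam\<^sup>2 * Xdev s m) s {a..b}" if "s \<in> {a..b}" for s
    using U_deriv[of s] that assms by (auto intro: L2_deriv_within_subset)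
  obtain MU where MU: "\<And>s. s \<in> {a..b} \<Longrightarrow> \<bar>L2norm (U s)\<bar> \<le> MU"
    using continuous_on_compact_abs_bound[OF compact_Icc continuous_on_L2norm_of_deriv[OF deriv]] assms
    by auto
  obtain LX where "L2_lipschitz_on LX {a..b} Xdev"
    using Xdev_lipschitz[OF assms] .
  then obtain MX where MX: "\<And>s. s \<in> {a..b} \<Longrightarrow> \<bar>L2norm (Xdev s)\<bar> \<le> MX"
    using continuous_on_compact_abs_bound[OF compact_Icc lipschitz_on_continuous_on[OF lipschitz_on_L2norm]]
    by metis
  have "L2norm (\<lambda>m. - 2 * \<kappa> * U s m - lam\<^sup>2 * Xdev s m) \<le> 2 * \<kappa> * MU + lam\<^sup>2 * MX" if "s \<in> {a..b}" for s
  proof -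
    have "L2norm (\<lambda>m. - 2 * \<kappa> * U s m - lam\<^sup>2 * Xdev s m)
        \<le> L2norm (\<lambda>m. - 2 * \<kappa> * U s m) + L2norm (\<lambda>m. lam\<^sup>2 * Xdev s m)"
      using that assms by (intro L2norm_diff_le) auto
    also have "\<dots> = 2 * \<kappa> * L2norm (U s) + lam\<^sup>2 * L2norm (Xdev s)"
      using kappa_pos by (simp add: L2norm_cmult abs_mult)
    also have "\<dots> \<le> 2 * \<kappa> * MU + lam\<^sup>2 * MX"
      using MU[OF that] MX[OF that] kappa_pos by (intro add_mono mult_left_mono) auto
    finally show ?thesis .
  qed
  moreover have "0 \<le> 2 * \<kappa> * MU + lam\<^sup>2 * MX" if "a \<le> b"
    using MU[of a] MX[of a] that kappa_pos by simp
  ultimately have "L2_lipschitz_on (2 * \<kappa> * MU + lam\<^sup>2 * MX) {a..b} U" if "a \<le> b"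
    using that assms by (intro L2_lipschitz_on_deriv_bound[OF convex_real_interval(5) _ deriv]) auto
  moreover have "L2_lipschitz_on 0 {a..b} U" if "\<not> a \<le> b"
    using that by (simp add: L2_lipschitz_on_def)
  ultimately show ?thesis
    using that by blast
qed

lemma mean_velocity_deriv:
  assumes "0 \<le> t"
  shows "(mean_velocity has_real_derivative - 2 * \<kappa> * mean_velocity t) (at t within {0..})"
proof -
  have "((\<lambda>s. L2inner (U s) (\<lambda>m. 1)) has_real_derivative
      L2inner (\<lambda>m. - 2 * \<kappa> * U t m - lam\<^sup>2 * Xdev t m) (\<lambda>m. 1) + L2inner (U t) (\<lambda>m. 0)) (at t within {0..})"
    by (rule L2inner_has_derivative[OF U_deriv[OF assms] L2_deriv_within_const]) (use assms in auto)
  then show ?thesis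
    using assms by (simp add: mean_velocity_def[abs_def] L2inner_simps Xdev_mean)
qed

lemma mean_velocity_0: "mean_velocity 0 = v0bar"
proof -
  have q: "quantile \<rho>0 \<in> borel_measurable Om"
    by (rule borel_measurable_Om_mono_on[OF real_distribution.mono_on_quantile[OF rho0]])
  have "AE m in Om. U 0 m = v0 (quantile \<rho>0 m)"
    using solution by (simp add: lagrangian_solution_def)
  then have "mean_velocity 0 = (\<integral>m. v0 (quantile \<rho>0 m) \<partial>Om)"
    unfolding mean_velocity_def integral_Om_eq_L2inner[symmetric]
    using q v0_measurable L2_measurable[OF U_L2[of 0]] by (intro integral_cong_AE) auto
  also have "\<dots> = (\<integral>x. v0 x \<partial>distr Om borel (quantile \<rho>0))"
    using q v0_measurable by (subst integral_distr) auto
  finally show ?thesis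
    by (simp add: real_distribution.distr_Om_quantile[OF rho0] v0bar_def)
qed

lemma mean_velocity_eq: "0 \<le> t \<Longrightarrow> mean_velocity t = v0bar * exp (- 2 * \<kappa> * t)"
proof -
  have "\<exists>c. \<forall>s\<in>{0..}. mean_velocity s * exp (2 * \<kappa> * s) = c"
  proof (rule has_field_derivative_zero_constant)
    fix s :: real assume "s \<in> {0..}"
    then have "((\<lambda>s. mean_velocity s * exp (2 * \<kappa> * s)) has_real_derivative
        (- 2 * \<kappa> * mean_velocity s) * exp (2 * \<kappa> * s) + exp (2 * \<kappa> * s) * (2 * \<kappa>) * mean_velocity s)
        (at s within {0..})"
      by (intro DERIV_mult mean_velocity_deriv derivative_eq_intros) auto
    then show "((\<lambda>s. mean_velocity s * exp (2 * \<kappa> * s)) has_real_derivative 0) (at s within {0..})"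
      by (simp add: algebra_simps)
  qed simp
  then have "mean_velocity t * exp (2 * \<kappa> * t) = v0bar" if "0 \<le> t" for t
    using that mean_velocity_0 by force
  moreover have "exp (2 * \<kappa> * t) * exp (- 2 * \<kappa> * t) = 1"
    by (simp flip: exp_add)
  ultimately show "0 \<le> t \<Longrightarrow> mean_velocity t = v0bar * exp (- 2 * \<kappa> * t)"
    by (metis mult.assoc mult.right_neutral)
qed

lemma center_0: "center 0 = x0bar"
proof -
  have q: "quantile \<rho>0 \<in> borel_measurable Om"
    by (rule borel_measurable_Om_mono_on[OF real_distribution.mono_on_quantile[OF rho0]])
  have "AE m in Om. X 0 m = quantile \<rho>0 m"
    using solution by (simp add: lagrangian_solution_def)
  then have "center 0 = (\<integral>m. quantile \<rho>0 m \<partial>Om)"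
    unfolding center_def integral_Om_eq_L2inner[symmetric]
    using q L2_measurable[OF X_L2[of 0]] by (intro integral_cong_AE) auto
  also have "\<dots> = (\<integral>x. x \<partial>distr Om borel (quantile \<rho>0))"
    using q by (subst integral_distr) auto
  finally show ?thesis
    by (simp add: real_distribution.distr_Om_quantile[OF rho0] x0bar_def)
qed

lemma AE_regular:
  obtains N where "negligible N" "\<And>t. 0 \<le> t \<Longrightarrow> t \<notin> N \<Longrightarrow> regular t"
proof -
  have "AE t in lborel. 0 \<le> t \<longrightarrow> regular t"
    using solution by (simp add: lagrangian_solution_def regular_def)
  then obtain N where "N \<in> null_sets lborel" "{t. \<not> (0 \<le> t \<longrightarrow> regular t)} \<subseteq> N"
    unfolding eventually_ae_filter by auto
  then show ?thesis
    using negligible_iff_null_sets null_sets_completionI that by blast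
qed

lemma regular_deriv:
  assumes "0 < t" "regular t"
  obtains D W where "L2_deriv_within X D t {0..}" "D \<in> L2" "W \<in> L2" "D = (\<lambda>m. U t m - W m)"
    "L2inner W D = 0" "L2inner W (\<lambda>m. 1) = 0" "L2inner W (Xdev t) \<ge> 0"
proof -
  obtain D where D: "L2_deriv_within X D t {0..}" and W: "(\<lambda>m. U t m - D m) \<in> normal_cone (X t)"
    using assms(2) unfolding regular_def by blast
  let ?W = "\<lambda>m. U t m - D m"
  have K: "X t \<in> Kcone"
    using assms(1) by (simp add: X_Kcone)
  have "L2inner ?W (Xdev t) = - L2inner ?W (\<lambda>m. 2 * m - 1)"
    using normal_cone_L2inner_self[OF K W] normal_cone_L2inner_const[OF K W, of "center t"]
      normal_cone_L2[OF W] assms(1)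
    by (simp add: Xdev_def L2inner_simps)
  moreover have "(\<lambda>m. 2 * m - 1) \<in> Kcone"
    by (auto simp: Kcone_def mono_on_def)
  ultimately have "L2inner ?W (Xdev t) \<ge> 0"
    using normal_cone_L2inner_nonpos[OF K W] by fastforce
  moreover have "L2inner ?W D = 0"
    using normal_cone_L2inner_deriv[OF assms(1) D X_Kcone W] .
  ultimately show ?thesis
    using that[OF D L2_deriv_within_L2[OF D] normal_cone_L2[OF W]] normal_cone_L2inner_const[OF K W]
    by auto
qed

lemma center_deriv:
  assumes "0 < t" "regular t"
  shows "(center has_real_derivative mean_velocity t) (at t within {0..})"
proof -
  obtain D W where D: "L2_deriv_within X D t {0..}" "W \<in> L2" "D = (\<lambda>m. U t m - W m)"
    "L2inner W (\<lambda>m. 1) = 0"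
    by (rule regular_deriv[OF assms]) blast
  have "((\<lambda>s. L2inner (X s) (\<lambda>m. 1)) has_real_derivative L2inner D (\<lambda>m. 1) + L2inner (X t) (\<lambda>m. 0))
      (at t within {0..})"
    by (rule L2inner_has_derivative[OF D(1) L2_deriv_within_const]) (use assms in auto)
  then show ?thesis
    using D assms by (simp add: center_def[abs_def] mean_velocity_def L2inner_simps)
qed

lemma center_eq:
  assumes "0 \<le> t"
  shows "center t = xbar - v0bar / (2 * \<kappa>) * exp (- 2 * \<kappa> * t)"
proof -
  define f where "f s = center s + v0bar / (2 * \<kappa>) * exp (- 2 * \<kappa> * s)" for s
  obtain L where "L-lipschitz_on {0..t} center"
    using center_lipschitz by blast
  then have lip: "(L + \<bar>v0bar / (2 * \<kappa>)\<bar> * (\<bar>- 2 * \<kappa>\<bar> * exp (\<bar>- 2 * \<kappa>\<bar> * max \<bar>0\<bar> \<bar>t\<bar>)))-lipschitz_on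
      {0..t} f"
    unfolding f_def by (intro lipschitz_on_add lipschitz_on_cmult_real lipschitz_on_exp_Icc)
  obtain N where N: "negligible N" "\<And>s. 0 \<le> s \<Longrightarrow> s \<notin> N \<Longrightarrow> regular s"
    using AE_regular by blast
  have "f t = f 0"
  proof (rule DERIV_zero_ae_imp_constant[OF assms lip N(1)])
    fix s assume s: "s \<in> {0<..<t}" "s \<notin> N"
    have "(f has_real_derivative mean_velocity s + v0bar / (2 * \<kappa>) * (exp (- 2 * \<kappa> * s) * (- 2 * \<kappa>)))
        (at s within {0..})"
      unfolding f_def[abs_def] using s N(2)
      by (intro DERIV_add DERIV_cmult center_deriv derivative_eq_intros) auto
    then show "(f has_real_derivative 0) (at s within {0..t})"
      using s kappa_pos by (auto intro: DERIV_subset simp: mean_velocity_eq)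
  qed
  then show ?thesis
    using kappa_pos by (simp add: f_def center_0 xbar_def)
qed

lemma Udev_deriv:
  assumes "0 \<le> t"
  shows "L2_deriv_within Udev (\<lambda>m. - 2 * \<kappa> * Udev t m - lam\<^sup>2 * Xdev t m) t {0..}"
proof -
  have "L2_deriv_within (\<lambda>s m. U s m - 0 - mean_velocity s)
      (\<lambda>m. (- 2 * \<kappa> * U t m - lam\<^sup>2 * Xdev t m) - (- 2 * \<kappa> * mean_velocity t)) t {0..}"
    by (rule L2_deriv_within_diff[OF U_deriv[OF assms] mean_velocity_deriv[OF assms]]) (use assms in auto)
  then show ?thesis
    by (simp add: Udev_def[abs_def] algebra_simps)
qed

lemma Xdev_deriv:
  assumes "0 < t" and D: "L2_deriv_within X D t {0..}" "D = (\<lambda>m. U t m - W m)" and "regular t"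
  shows "L2_deriv_within Xdev (\<lambda>m. Udev t m - W m) t {0..}"
proof -
  have "L2_deriv_within (\<lambda>s m. X s m - (2 * m - 1) - center s) (\<lambda>m. D m - mean_velocity t) t {0..}"
    by (rule L2_deriv_within_diff[OF D(1) center_deriv[OF \<open>0 < t\<close> \<open>regular t\<close>]]) (use assms in auto)
  then show ?thesis
    by (simp add: Xdev_def[abs_def] Udev_def D(2) algebra_simps)
qed

lemma Udev_lipschitz:
  assumes "0 \<le> a"
  obtains L where "L2_lipschitz_on L {a..b} Udev"
proof -
  obtain LU where LU: "L2_lipschitz_on LU {a..b} U"
    using U_lipschitz[OF assms] .
  obtain Lm where "Lm-lipschitz_on {a..b} mean_velocity"
    unfolding mean_velocity_def[abs_def]
    by (rule L2_lipschitz_on_inner[OF compact_Icc LU L2_lipschitz_on_const]) auto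
  then have "L2_lipschitz_on (LU + Lm) {a..b} (\<lambda>s m. U s m - 0 - mean_velocity s)"
    by (intro L2_lipschitz_on_diff LU) auto
  then have "L2_lipschitz_on (LU + Lm) {a..b} Udev"
    by (simp add: Udev_def[abs_def])
  then show ?thesis
    by (rule that)
qed

lemma energy_lipschitz: obtains L where "L-lipschitz_on {0..T} energy"
proof -
  obtain Lu Lx where u: "L2_lipschitz_on Lu {0..T} Udev" and x: "L2_lipschitz_on Lx {0..T} Xdev"
    using Udev_lipschitz Xdev_lipschitz by (metis order_refl)
  obtain L1 L2 L3 where "L1-lipschitz_on {0..T} (\<lambda>s. L2inner (Udev s) (Udev s))"
    "L2-lipschitz_on {0..T} (\<lambda>s. L2inner (Xdev s) (Xdev s))" "L3-lipschitz_on {0..T} (\<lambda>s. L2inner (Xdev s) (Udev s))"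
    using L2_lipschitz_on_inner[OF compact_Icc u u] L2_lipschitz_on_inner[OF compact_Icc x x]
      L2_lipschitz_on_inner[OF compact_Icc x u] by metis
  then have "(\<bar>1/2\<bar> * L1 + \<bar>lam\<^sup>2/2\<bar> * L2 + \<bar>\<kappa>\<bar> * L3)-lipschitz_on {0..T} energy"
    unfolding energy_def[abs_def] by (intro lipschitz_on_add lipschitz_on_cmult_real)
  then show ?thesis ..
qed

lemma energy_deriv:
  assumes "0 < t" "regular t"
  obtains F' where "(energy has_real_derivative F') (at t within {0..})" "F' + 2 * \<kappa> * energy t \<le> 0"
proof -
  obtain D W where D: "L2_deriv_within X D t {0..}" "D \<in> L2" "W \<in> L2" "D = (\<lambda>m. U t m - W m)"
    "L2inner W D = 0" "L2inner W (\<lambda>m. 1) = 0" "L2inner W (Xdev t) \<ge> 0"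
    by (rule regular_deriv[OF assms])
  let ?u' = "\<lambda>m. - 2 * \<kappa> * Udev t m - lam\<^sup>2 * Xdev t m"
  let ?x' = "\<lambda>m. Udev t m - W m"
  have du: "L2_deriv_within Udev ?u' t {0..}"
    using Udev_deriv assms by simp
  have dx: "L2_deriv_within Xdev ?x' t {0..}"
    by (rule Xdev_deriv[OF assms(1) D(1,4) assms(2)])
  have L2: "t \<in> {0..}" "\<And>s. s \<in> {0..} \<Longrightarrow> Udev s \<in> L2" "\<And>s. s \<in> {0..} \<Longrightarrow> Xdev s \<in> L2"
    using assms by auto
  define F' where "F' = (1/2) * (L2inner ?u' (Udev t) + L2inner (Udev t) ?u')
      + (lam\<^sup>2/2) * (L2inner ?x' (Xdev t) + L2inner (Xdev t) ?x') + \<kappa> * (L2inner ?x' (Udev t) + L2inner (Xdev t) ?u')"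
  have "(energy has_real_derivative F') (at t within {0..})"
    unfolding energy_def[abs_def] F'_def
    by (intro DERIV_add DERIV_cmult L2inner_has_derivative[OF du du L2(1,2,2)]
        L2inner_has_derivative[OF dx dx L2(1,3,3)] L2inner_has_derivative[OF dx du L2(1,3,2)])
  moreover have "F' + 2 * \<kappa> * energy t = - lam\<^sup>2 * L2inner W (Xdev t) - \<kappa> * L2inner W (Udev t)"
    unfolding F'_def energy_def using D(3) assms(1) by (intro energy_derivative_identity) auto
  moreover have "L2inner W (Udev t) = L2inner W W"
    using D assms(1) L2inner_cmult_right[of W "mean_velocity t" "\<lambda>m. 1"] by (simp add: Udev_def L2inner_simps)
  moreover have "0 \<le> lam\<^sup>2 * L2inner W (Xdev t)" "0 \<le> \<kappa> * L2inner W W"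
    using D(7) kappa_pos L2inner_self_nonneg[of W] by simp_all
  ultimately show ?thesis
    using that by force
qed

lemma energy_decay:
  assumes "0 \<le> t"
  shows "energy t \<le> energy 0 * exp (- 2 * \<kappa> * t)"
proof -
  obtain L where "L-lipschitz_on {0..t} energy"
    using energy_lipschitz .
  then obtain L' where lip: "L'-lipschitz_on {0..t} (\<lambda>s. exp (2 * \<kappa> * s) * energy s)"
    using lipschitz_on_mult_compact[OF compact_Icc lipschitz_on_exp_Icc] by blast
  obtain N where N: "negligible N" "\<And>s. 0 \<le> s \<Longrightarrow> s \<notin> N \<Longrightarrow> regular s"
    using AE_regular by blast
  have "exp (2 * \<kappa> * t) * energy t \<le> exp (2 * \<kappa> * 0) * energy 0"
  proof (rule DERIV_nonpos_ae_imp_nonincreasing[OF assms lip N(1)])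
    fix s assume s: "s \<in> {0<..<t}" "s \<notin> N"
    then obtain F' where F': "(energy has_real_derivative F') (at s within {0..})" "F' + 2 * \<kappa> * energy s \<le> 0"
      using energy_deriv N(2) by force
    have "((\<lambda>s. exp (2 * \<kappa> * s) * energy s) has_real_derivative
        exp (2 * \<kappa> * s) * (2 * \<kappa>) * energy s + F' * exp (2 * \<kappa> * s)) (at s within {0..t})"
      by (intro DERIV_mult derivative_eq_intros DERIV_subset[OF F'(1)]) auto
    moreover have "exp (2 * \<kappa> * s) * (2 * \<kappa>) * energy s + F' * exp (2 * \<kappa> * s) \<le> 0"
      using F'(2) mult_nonneg_nonpos[of "exp (2 * \<kappa> * s)" "F' + 2 * \<kappa> * energy s"]
      by (simp add: algebra_simps)
    ultimately show "\<exists>f'. ((\<lambda>s. exp (2 * \<kappa> * s) * energy s) has_real_derivative f') (at s within {0..t}) \<and> f' \<le> 0"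
      by blast
  qed
  then show ?thesis
    by (simp add: exp_minus field_simps)
qed

definition coercivity :: real where "coercivity = (1 - \<kappa> / lam) / 2"
definition deviation_bound :: real where "deviation_bound = sqrt (energy 0 / coercivity)"
definition velocity_bound :: real where "velocity_bound = deviation_bound + \<bar>v0bar\<bar>"

definition rho_inf :: "real measure" where
  "rho_inf = density lborel (\<lambda>x. ennreal (indicator {xbar - 1<..<xbar + 1} x / 2))"

lemma lam_pos: "0 < lam"
  using kappa_pos kappa_less by simp

lemma coercivity_pos: "0 < coercivity"
  using kappa_pos kappa_less lam_pos by (simp add: coercivity_def field_simps)

lemma energy_coercive:
  assumes "0 \<le> t"
  shows "coercivity * ((L2norm (Udev t))\<^sup>2 + lam\<^sup>2 * (L2norm (Xdev t))\<^sup>2) \<le> energy t"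
proof -
  have "\<bar>L2inner (Xdev t) (Udev t)\<bar> \<le> L2norm (Udev t) * L2norm (Xdev t)"
    using L2inner_abs_le[of "Xdev t" "Udev t"] assms by (simp add: mult.commute)
  then show ?thesis
    unfolding coercivity_def energy_def L2norm_power2[symmetric]
    using quadratic_form_lower_bound[OF _ L2norm_nonneg L2norm_nonneg kappa_pos kappa_less]
    by simp
qed

lemma energy_0_nonneg: "0 \<le> energy 0"
proof -
  have "0 \<le> coercivity * ((L2norm (Udev 0))\<^sup>2 + lam\<^sup>2 * (L2norm (Xdev 0))\<^sup>2)"
    using coercivity_pos by simp
  then show ?thesis
    using energy_coercive[of 0] by simp
qed

lemma deviation_decay:
  assumes "0 \<le> t"
  shows "L2norm (Udev t) \<le> deviation_bound * exp (- \<kappa> * t)"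
    and "lam * L2norm (Xdev t) \<le> deviation_bound * exp (- \<kappa> * t)"
proof -
  have "(exp (- \<kappa> * t))\<^sup>2 = exp (- 2 * \<kappa> * t)"
    by (simp add: power2_eq_square flip: exp_add)
  then have bound_sq: "(deviation_bound * exp (- \<kappa> * t))\<^sup>2 = energy 0 * exp (- 2 * \<kappa> * t) / coercivity"
    using energy_0_nonneg coercivity_pos by (simp add: deviation_bound_def power_mult_distrib)
  have "coercivity * ((L2norm (Udev t))\<^sup>2 + (lam * L2norm (Xdev t))\<^sup>2) \<le> energy 0 * exp (- 2 * \<kappa> * t)"
    using energy_coercive[OF assms] energy_decay[OF assms] by (simp add: power_mult_distrib)
  then have sum: "(L2norm (Udev t))\<^sup>2 + (lam * L2norm (Xdev t))\<^sup>2 \<le> (deviation_bound * exp (- \<kappa> * t))\<^sup>2"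
    unfolding bound_sq using coercivity_pos by (simp add: pos_le_divide_eq mult.commute)
  have nonneg: "0 \<le> deviation_bound * exp (- \<kappa> * t)"
    using energy_0_nonneg coercivity_pos by (simp add: deviation_bound_def)
  have "(L2norm (Udev t))\<^sup>2 \<le> (deviation_bound * exp (- \<kappa> * t))\<^sup>2"
    using sum zero_le_power2[of "lam * L2norm (Xdev t)"] by linarith
  then show "L2norm (Udev t) \<le> deviation_bound * exp (- \<kappa> * t)"
    using nonneg by (rule power2_le_imp_le)
  have "(lam * L2norm (Xdev t))\<^sup>2 \<le> (deviation_bound * exp (- \<kappa> * t))\<^sup>2"
    using sum zero_le_power2[of "L2norm (Udev t)"] by linarith
  then show "lam * L2norm (Xdev t) \<le> deviation_bound * exp (- \<kappa> * t)"
    using nonneg by (rule power2_le_imp_le)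
qed

lemma deviation_bound_nonneg: "0 \<le> deviation_bound"
  using energy_0_nonneg coercivity_pos by (simp add: deviation_bound_def)

lemma U_decay:
  assumes "0 \<le> t"
  shows "L2norm (U t) \<le> velocity_bound * exp (- \<kappa> * t)"
proof -
  have "L2norm (U t) \<le> L2norm (Udev t) + \<bar>mean_velocity t\<bar>"
    using L2norm_add_le[of "Udev t" "\<lambda>m. mean_velocity t"] assms by (simp add: Udev_def)
  also have "\<bar>mean_velocity t\<bar> \<le> \<bar>v0bar\<bar> * exp (- \<kappa> * t)"
    using assms kappa_pos by (simp add: mean_velocity_eq abs_mult mult_left_mono)
  finally show ?thesis
    using deviation_decay(1)[OF assms] by (simp add: velocity_bound_def distrib_right)
qed

lemma regular_deriv_norm_le:
  assumes "0 < t" "regular t"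
  obtains D where "L2_deriv_within X D t {0..}" "L2norm D \<le> L2norm (U t)"
proof -
  obtain D W where D: "L2_deriv_within X D t {0..}" "D \<in> L2" "W \<in> L2" "D = (\<lambda>m. U t m - W m)"
    "L2inner W D = 0"
    by (rule regular_deriv[OF assms]) blast
  have "U t = (\<lambda>m. D m + W m)"
    unfolding D(4) by simp
  then have "L2inner (U t) (U t) = L2inner D D + 2 * L2inner W D + L2inner W W"
    using D(2,3) by (simp add: L2inner_add_left L2inner_add_right L2inner_commute[of D W])
  then have "(L2norm D)\<^sup>2 \<le> (L2norm (U t))\<^sup>2"
    using D(5) L2inner_self_nonneg[of W] by (simp add: L2norm_power2)
  then have "L2norm D \<le> L2norm (U t)"
    by (rule power2_le_imp_le) (rule L2norm_nonneg)
  with D(1) show ?thesis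
    by (rule that)
qed

lemma X_increment_decay:
  assumes "0 \<le> t" "t \<le> s"
  shows "L2norm (\<lambda>m. X s m - X t m) \<le> velocity_bound * exp (- \<kappa> * t) * (s - t)"
proof -
  obtain L where L: "L2_lipschitz_on L {t..s} X"
    using X_lipschitz[OF assms(1)] .
  obtain N where N: "negligible N" "\<And>r. 0 \<le> r \<Longrightarrow> r \<notin> N \<Longrightarrow> regular r"
    using AE_regular by blast
  show ?thesis
  proof (rule L2norm_diff_le_of_deriv_ae[OF L assms(2) _ N(1)])
    show "0 \<le> velocity_bound * exp (- \<kappa> * t)"
      using deviation_bound_nonneg by (simp add: velocity_bound_def)
    fix r assume r: "r \<in> {t<..<s}" "r \<notin> N"
    then have "0 < r" "regular r"
      using N(2) assms(1) by auto
    then obtain D where D: "L2_deriv_within X D r {0..}" "L2norm D \<le> L2norm (U r)"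
      by (rule regular_deriv_norm_le)
    have "L2norm (U r) \<le> velocity_bound * exp (- \<kappa> * r)"
      using U_decay r assms(1) by simp
    also have "\<dots> \<le> velocity_bound * exp (- \<kappa> * t)"
      using r kappa_pos deviation_bound_nonneg by (intro mult_left_mono) (auto simp: velocity_bound_def)
    moreover have "L2_deriv_within X D r {t..s}"
      using assms(1) by (intro L2_deriv_within_subset[OF D(1)]) auto
    ultimately show "\<exists>D. L2_deriv_within X D r {t..s} \<and> L2norm D \<le> velocity_bound * exp (- \<kappa> * t)"
      using D(2) by auto
  qed
qed

lemma right_deriv_decay:
  assumes "0 \<le> t" "L2_deriv_within X V t {t..}"
  shows "L2norm V \<le> velocity_bound * exp (- \<kappa> * t)"
  using assms by (intro L2norm_le_of_right_deriv[OF assms(2)] X_increment_decay) auto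

lemma quantile_distr_X:
  assumes "0 \<le> t"
  shows "AE m in Om. quantile (distr Om borel (X t)) m = X t m"
proof -
  have mono: "mono_on {0<..<1} (X t)"
    using X_Kcone[OF assms] by (simp add: Kcone_def)
  have "AE m in Om. m \<in> {0<..<1}"
    by (rule AE_I2) simp
  with AE_Om_isCont_mono_on[OF mono] show ?thesis
    by eventually_elim (rule quantile_distr_mono_on[OF L2_measurable[OF X_L2[OF assms]] mono])
qed

lemma rearrangement_decay:
  assumes "0 \<le> t"
  shows "L2norm (\<lambda>m. quantile (distr Om borel (X t)) m - quantile rho_inf m)
    \<le> (deviation_bound / lam + \<bar>v0bar\<bar> / (2 * \<kappa>)) * exp (- \<kappa> * t)"
proof -
  have "AE m in Om. m \<in> {0<..<1}"
    by (rule AE_I2) simp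
  with quantile_distr_X[OF assms]
  have "AE m in Om. quantile (distr Om borel (X t)) m - quantile rho_inf m = Xdev t m + (center t - xbar)"
    by eventually_elim (simp add: rho_inf_def quantile_uniform_density Xdev_def)
  then have "L2norm (\<lambda>m. quantile (distr Om borel (X t)) m - quantile rho_inf m)
      \<le> L2norm (\<lambda>m. Xdev t m + (center t - xbar))"
    using assms by (intro L2norm_AE_le) auto
  also have "\<dots> \<le> L2norm (Xdev t) + \<bar>center t - xbar\<bar>"
    using L2norm_add_le[of "Xdev t" "\<lambda>m. center t - xbar"] assms by simp
  also have "\<dots> \<le> deviation_bound / lam * exp (- \<kappa> * t) + \<bar>v0bar\<bar> / (2 * \<kappa>) * exp (- \<kappa> * t)"
  proof (rule add_mono)
    show "L2norm (Xdev t) \<le> deviation_bound / lam * exp (- \<kappa> * t)"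
      using deviation_decay(2)[OF assms] lam_pos by (simp add: field_simps)
    have "\<bar>center t - xbar\<bar> = \<bar>v0bar\<bar> / (2 * \<kappa>) * exp (- 2 * \<kappa> * t)"
      using assms kappa_pos by (simp add: center_eq abs_mult)
    also have "\<dots> \<le> \<bar>v0bar\<bar> / (2 * \<kappa>) * exp (- \<kappa> * t)"
      using assms kappa_pos by (intro mult_left_mono) auto
    finally show "\<bar>center t - xbar\<bar> \<le> \<bar>v0bar\<bar> / (2 * \<kappa>) * exp (- \<kappa> * t)" .
  qed
  finally show ?thesis
    by (simp add: distrib_right)
qed

lemma dT2_decay:
  assumes V: "\<And>t. 0 \<le> t \<Longrightarrow> L2_deriv_within X (V t) t {t..}"
    and v: "\<And>t. 0 \<le> t \<Longrightarrow> AE m in Om. v t (X t m) = V t m"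
  shows "\<exists>C. \<forall>t\<ge>0. dT2 (distr Om borel (X t)) (v t) rho_inf (\<lambda>_. 0) \<le> C * exp (- \<kappa> * t)"
proof (intro exI allI impI)
  fix t :: real assume "0 \<le> t"
  let ?q = "quantile (distr Om borel (X t))"
  have "AE m in Om. v t (?q m) - 0 = V t m"
    using quantile_distr_X[OF \<open>0 \<le> t\<close>] v[OF \<open>0 \<le> t\<close>] by eventually_elim simp
  then have "L2norm (\<lambda>m. v t (?q m) - 0) \<le> L2norm (V t)"
    using V[OF \<open>0 \<le> t\<close>] by (intro L2norm_AE_le L2_deriv_within_L2)
  also have "\<dots> \<le> velocity_bound * exp (- \<kappa> * t)"
    by (rule right_deriv_decay[OF \<open>0 \<le> t\<close> V[OF \<open>0 \<le> t\<close>]])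
  finally have "L2norm (\<lambda>m. v t (?q m) - 0) \<le> velocity_bound * exp (- \<kappa> * t)" .
  moreover have "dT2 (distr Om borel (X t)) (v t) rho_inf (\<lambda>_. 0)
      \<le> L2norm (\<lambda>m. ?q m - quantile rho_inf m) + L2norm (\<lambda>m. v t (?q m) - 0)"
    unfolding dT2_def by (rule sqrt_sum_squares_le_sum) (simp_all add: L2norm_nonneg)
  ultimately show "dT2 (distr Om borel (X t)) (v t) rho_inf (\<lambda>_. 0)
      \<le> (deviation_bound / lam + \<bar>v0bar\<bar> / (2 * \<kappa>) + velocity_bound) * exp (- \<kappa> * t)"
    using rearrangement_decay[OF \<open>0 \<le> t\<close>] by (simp add: distrib_right)
qed

end

theorem theorem7p3:
  shows "\<exists>c>0. \<forall>(lam::real) (\<kappa>::real) (\<rho>0::real measure) (v0::real \<Rightarrow> real)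
      (X::real \<Rightarrow> real \<Rightarrow> real) (U::real \<Rightarrow> real \<Rightarrow> real)
      (V::real \<Rightarrow> real \<Rightarrow> real) (v::real \<Rightarrow> real \<Rightarrow> real).
    \<kappa> > 0 \<and> lam > \<kappa> \<and> P2 \<rho>0 \<and> v0 \<in> borel_measurable \<rho>0 \<and> integrable \<rho>0 (\<lambda>x. (v0 x)^2) \<and>
    lagrangian_solution lam \<kappa> \<rho>0 v0 X U \<and>
    (\<forall>t\<ge>0. L2_deriv_within X (V t) t {t..}) \<and>
    (\<forall>t\<ge>0. AE m in Om. v t (X t m) = V t m)
    \<longrightarrow>
    (let xbar = (\<integral>x. x \<partial>\<rho>0) + (1 / (2 * \<kappa>)) * (\<integral>x. v0 x \<partial>\<rho>0);
         \<rho>inf = density lborel (\<lambda>x. ennreal (indicator {xbar - 1<..<xbar + 1} x / 2))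
     in \<exists>C. \<forall>t\<ge>0.
          dT2 (distr Om borel (X t)) (v t) \<rho>inf (\<lambda>_. 0) \<le> C * exp (- c * (2 * \<kappa>) * t))"
proof (intro exI[of _ "1/2"] conjI allI impI)
  fix lam \<kappa> :: real and \<rho>0 :: "real measure" and v0 :: "real \<Rightarrow> real"
    and X U V v :: "real \<Rightarrow> real \<Rightarrow> real"
  assume H: "\<kappa> > 0 \<and> lam > \<kappa> \<and> P2 \<rho>0 \<and> v0 \<in> borel_measurable \<rho>0 \<and> integrable \<rho>0 (\<lambda>x. (v0 x)^2) \<and>
    lagrangian_solution lam \<kappa> \<rho>0 v0 X U \<and>
    (\<forall>t\<ge>0. L2_deriv_within X (V t) t {t..}) \<and>
    (\<forall>t\<ge>0. AE m in Om. v t (X t m) = V t m)"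
  then have rho0: "real_distribution \<rho>0"
    by (auto simp: P2_def real_distribution_def real_distribution_axioms_def)
  have "v0 \<in> borel_measurable borel"
    using H rho0 by (simp add: real_distribution.events_eq_borel cong: measurable_cong_sets)
  with H rho0 interpret lagrangian_flow lam \<kappa> \<rho>0 v0 X U
    by (intro lagrangian_flow.intro) blast+
  have "\<exists>C. \<forall>t\<ge>0. dT2 (distr Om borel (X t)) (v t) rho_inf (\<lambda>_. 0) \<le> C * exp (- \<kappa> * t)"
    using H by (intro dT2_decay) blast+
  then show "let xbar = (\<integral>x. x \<partial>\<rho>0) + (1 / (2 * \<kappa>)) * (\<integral>x. v0 x \<partial>\<rho>0);
         \<rho>inf = density lborel (\<lambda>x. ennreal (indicator {xbar - 1<..<xbar + 1} x / 2))
     in \<exists>C. \<forall>t\<ge>0. dT2 (distr Om borel (X t)) (v t) \<rho>inf (\<lambda>_. 0) \<le> C * exp (- (1/2) * (2 * \<kappa>) * t)"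
    unfolding rho_inf_def xbar_def x0bar_def v0bar_def Let_def by simp
qed simp

end
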